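(* Let $S$ be a completely $0$-simple semigroup with finitely many left ideals and finitely many right ideals. If every maximal subgroup of $S$ is defined by a finite complete rewriting system, then $S$ is also defined by a finite complete rewriting system.
   Context: A semigroup $S$ with zero is completely $0$-simple if it is $0$-simple (i.e. $S^2\neq\{0\}$ and its only ideals are $\{0\}$ and $S$) and has $0$-minimal left and right ideals. A rewriting system $\langle X\mid R\rangle$ consists of an alphabet $X$ and rules $u\to v$ with $u,v\in X^+$; it is finite if $X,R$ are finite. One-step reduction: $w_1uw_2\to_R w_1vw_2$ for $(u\to v)\in R$; $\to_R^*$ is its reflexive transitive closure. It is noetherian if there is no infinite chain $w_1\to_R w_2\to_R\cdots$, confluent if $u\to_R^*v$, $u\to_R^*v'$ imply a common $w$ with $v\to_R^*w$, $v'\to_R^*w$, and complete if both. A semigroup (or group) is defined by $\langle X\mid R\rangle$ if it is isomorphic to $X^+$ modulo the congruence generated by $R$. *)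

theory Defs
  imports Main
begin

definition semigroup_on :: "'a set \<Rightarrow> ('a \<Rightarrow> 'a \<Rightarrow> 'a) \<Rightarrow> bool" where
  "semigroup_on S f \<longleftrightarrow> (\<forall>x\<in>S. \<forall>y\<in>S. f x y \<in> S) \<and>
     (\<forall>x\<in>S. \<forall>y\<in>S. \<forall>z\<in>S. f (f x y) z = f x (f y z))"

definition is_zero :: "'a set \<Rightarrow> ('a \<Rightarrow> 'a \<Rightarrow> 'a) \<Rightarrow> 'a \<Rightarrow> bool" where
  "is_zero S f z \<longleftrightarrow> z \<in> S \<and> (\<forall>x\<in>S. f z x = z \<and> f x z = z)"

definition setmult :: "('a \<Rightarrow> 'a \<Rightarrow> 'a) \<Rightarrow> 'a set \<Rightarrow> 'a set \<Rightarrow> 'a set" where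
  "setmult f A B = {f a b | a b. a \<in> A \<and> b \<in> B}"

definition left_ideal :: "'a set \<Rightarrow> ('a \<Rightarrow> 'a \<Rightarrow> 'a) \<Rightarrow> 'a set \<Rightarrow> bool" where
  "left_ideal S f I \<longleftrightarrow> I \<noteq> {} \<and> I \<subseteq> S \<and> setmult f S I \<subseteq> I"

definition right_ideal :: "'a set \<Rightarrow> ('a \<Rightarrow> 'a \<Rightarrow> 'a) \<Rightarrow> 'a set \<Rightarrow> bool" where
  "right_ideal S f I \<longleftrightarrow> I \<noteq> {} \<and> I \<subseteq> S \<and> setmult f I S \<subseteq> I"

definition two_sided_ideal :: "'a set \<Rightarrow> ('a \<Rightarrow> 'a \<Rightarrow> 'a) \<Rightarrow> 'a set \<Rightarrow> bool" where
  "two_sided_ideal S f I \<longleftrightarrow> left_ideal S f I \<and> right_ideal S f I"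

definition zero_simple :: "'a set \<Rightarrow> ('a \<Rightarrow> 'a \<Rightarrow> 'a) \<Rightarrow> 'a \<Rightarrow> bool" where
  "zero_simple S f z \<longleftrightarrow> setmult f S S \<noteq> {z} \<and>
     (\<forall>I. two_sided_ideal S f I \<longrightarrow> I = {z} \<or> I = S)"

definition zero_minimal_left_ideal :: "'a set \<Rightarrow> ('a \<Rightarrow> 'a \<Rightarrow> 'a) \<Rightarrow> 'a \<Rightarrow> 'a set \<Rightarrow> bool" where
  "zero_minimal_left_ideal S f z L \<longleftrightarrow> left_ideal S f L \<and> L \<noteq> {z} \<and>
     (\<forall>L'. left_ideal S f L' \<and> L' \<subseteq> L \<longrightarrow> L' = {z} \<or> L' = L)"

definition zero_minimal_right_ideal :: "'a set \<Rightarrow> ('a \<Rightarrow> 'a \<Rightarrow> 'a) \<Rightarrow> 'a \<Rightarrow> 'a set \<Rightarrow> bool" where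
  "zero_minimal_right_ideal S f z L \<longleftrightarrow> right_ideal S f L \<and> L \<noteq> {z} \<and>
     (\<forall>L'. right_ideal S f L' \<and> L' \<subseteq> L \<longrightarrow> L' = {z} \<or> L' = L)"

definition completely_zero_simple :: "'a set \<Rightarrow> ('a \<Rightarrow> 'a \<Rightarrow> 'a) \<Rightarrow> bool" where
  "completely_zero_simple S f \<longleftrightarrow> semigroup_on S f \<and>
     (\<exists>z. is_zero S f z \<and> zero_simple S f z \<and>
          (\<exists>L. zero_minimal_left_ideal S f z L) \<and> (\<exists>R. zero_minimal_right_ideal S f z R))"

definition is_subgroup_of :: "'a set \<Rightarrow> ('a \<Rightarrow> 'a \<Rightarrow> 'a) \<Rightarrow> 'a set \<Rightarrow> bool" where
  "is_subgroup_of S f H \<longleftrightarrow> H \<subseteq> S \<and> (\<forall>x\<in>H. \<forall>y\<in>H. f x y \<in> H) \<and>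
     (\<exists>e\<in>H. \<forall>x\<in>H. f e x = x \<and> f x e = x \<and> (\<exists>y\<in>H. f x y = e \<and> f y x = e))"

definition maximal_subgroup :: "'a set \<Rightarrow> ('a \<Rightarrow> 'a \<Rightarrow> 'a) \<Rightarrow> 'a set \<Rightarrow> bool" where
  "maximal_subgroup S f H \<longleftrightarrow> is_subgroup_of S f H \<and>
     (\<forall>K. is_subgroup_of S f K \<and> H \<subseteq> K \<longrightarrow> K = H)"

definition words :: "'b set \<Rightarrow> 'b list set" where
  "words X = {w. w \<noteq> [] \<and> set w \<subseteq> X}"

definition rewriting_system :: "'b set \<Rightarrow> ('b list \<times> 'b list) set \<Rightarrow> bool" where
  "rewriting_system X R \<longleftrightarrow> (\<forall>(u, v)\<in>R. u \<in> words X \<and> v \<in> words X)"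

definition rstep :: "('b list \<times> 'b list) set \<Rightarrow> ('b list \<times> 'b list) set" where
  "rstep R = {(w1 @ u @ w2, w1 @ v @ w2) | w1 u v w2. (u, v) \<in> R}"

definition noetherian :: "'b set \<Rightarrow> ('b list \<times> 'b list) set \<Rightarrow> bool" where
  "noetherian X R \<longleftrightarrow>
     \<not> (\<exists>c :: nat \<Rightarrow> 'b list. (\<forall>i. c i \<in> words X) \<and> (\<forall>i. (c i, c (Suc i)) \<in> rstep R))"

definition confluent :: "'b set \<Rightarrow> ('b list \<times> 'b list) set \<Rightarrow> bool" where
  "confluent X R \<longleftrightarrow> (\<forall>u\<in>words X. \<forall>v v'. (u, v) \<in> (rstep R)\<^sup>* \<and> (u, v') \<in> (rstep R)\<^sup>* \<longrightarrow>
     (\<exists>w. (v, w) \<in> (rstep R)\<^sup>* \<and> (v', w) \<in> (rstep R)\<^sup>*))"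

definition complete_rs :: "'b set \<Rightarrow> ('b list \<times> 'b list) set \<Rightarrow> bool" where
  "complete_rs X R \<longleftrightarrow> noetherian X R \<and> confluent X R"

definition rcong :: "('b list \<times> 'b list) set \<Rightarrow> ('b list \<times> 'b list) set" where
  "rcong R = (rstep R \<union> (rstep R)\<inverse>)\<^sup>*"

text \<open>(S, f) is isomorphic to \<open>X\<^sup>+\<close> modulo the congruence generated by R, expressed via a
  surjective homomorphism \<open>X\<^sup>+ \<rightarrow> S\<close> whose kernel is exactly that congruence.\<close>
definition defined_by :: "'a set \<Rightarrow> ('a \<Rightarrow> 'a \<Rightarrow> 'a) \<Rightarrow> 'b set \<Rightarrow> ('b list \<times> 'b list) set \<Rightarrow> bool" where
  "defined_by S f X R \<longleftrightarrow> (\<exists>\<phi>. \<phi> ` words X = S \<and>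
     (\<forall>u\<in>words X. \<forall>v\<in>words X. \<phi> (u @ v) = f (\<phi> u) (\<phi> v)) \<and>
     (\<forall>u\<in>words X. \<forall>v\<in>words X. \<phi> u = \<phi> v \<longleftrightarrow> (u, v) \<in> rcong R))"

text \<open>Finite alphabets are taken, without loss of generality, as finite sets of naturals.\<close>
definition fcrs_defined :: "'a set \<Rightarrow> ('a \<Rightarrow> 'a \<Rightarrow> 'a) \<Rightarrow> bool" where
  "fcrs_defined S f \<longleftrightarrow> (\<exists>(X :: nat set) R. finite X \<and> finite R \<and> rewriting_system X R \<and>
     complete_rs X R \<and> defined_by S f X R)"

end

theory Submission
  imports Defs
begin

text \<open>Fix a nonzero idempotent \<open>e\<close> and a finite complete rewriting system \<open>\<langle>X | R\<rangle>\<close> for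
  the maximal subgroup \<open>H\<close> at \<open>e\<close>.  Every nonzero element of \<open>S\<close> is uniquely \<open>r g q\<close> with
  \<open>g \<in> H\<close> and \<open>r\<close>, \<open>q\<close> taken from finite sets of representatives of the principal right and
  left ideals (Rees coordinates).  Take as letters the triples \<open>(r, x, q)\<close>, standing for
  \<open>r x q\<close>, together with a zero letter.  The rules are those of \<open>R\<close> decorated with outer
  coordinates, rules merging two adjacent letters whose inner coordinates are not both \<open>e\<close>
  (possible because \<open>q r\<close> is \<open>0\<close> or lies in \<open>H\<close>), and rules absorbing letters into zero.
  Merging lowers the number of non-\<open>e\<close> coordinates, and below that the decorated rules of \<open>R\<close>
  and zero absorption commute, so the system terminates.  Irreducible words are the zero
  letter and the decorations of \<open>R\<close>-irreducible words; by uniqueness of Rees coordinates and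
  completeness of \<open>R\<close> distinct irreducible words have distinct values, which yields both
  confluence and that the system defines \<open>S\<close>.\<close>

section \<open>Completely \<open>0\<close>-simple semigroups\<close>

lemma setmult_dual: "setmult (\<lambda>x y. f y x) A B = setmult f B A"
  unfolding setmult_def by blast

lemma left_ideal_dual: "left_ideal S (\<lambda>x y. f y x) I = right_ideal S f I"
  unfolding left_ideal_def right_ideal_def setmult_dual[of f S I] by (rule refl)

lemma right_ideal_dual: "right_ideal S (\<lambda>x y. f y x) I = left_ideal S f I"
  unfolding left_ideal_def right_ideal_def setmult_dual[of f I S] by (rule refl)

locale zero_simple_left_minimal =
  fixes S :: "'a set" and f :: "'a \<Rightarrow> 'a \<Rightarrow> 'a" (infixl "\<cdot>" 70) and z :: 'a
  assumes semigroup: "semigroup_on S f" and zero: "is_zero S f z"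
    and zero_simple: "zero_simple S f z"
    and minimal_left_exists: "\<exists>L. zero_minimal_left_ideal S f z L"
begin

lemma mult_closed [intro, simp]: "x \<in> S \<Longrightarrow> y \<in> S \<Longrightarrow> x \<cdot> y \<in> S"
  using semigroup unfolding semigroup_on_def by blast

lemma assoc: "x \<in> S \<Longrightarrow> y \<in> S \<Longrightarrow> w \<in> S \<Longrightarrow> x \<cdot> y \<cdot> w = x \<cdot> (y \<cdot> w)"
  using semigroup unfolding semigroup_on_def by blast

lemma zero_mem [simp]: "z \<in> S"
  and zero_mult [simp]: "x \<in> S \<Longrightarrow> z \<cdot> x = z"
  and mult_zero [simp]: "x \<in> S \<Longrightarrow> x \<cdot> z = z"
  using zero unfolding is_zero_def by blast+

lemma not_null: "\<exists>x\<in>S. \<exists>y\<in>S. x \<cdot> y \<noteq> z"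
proof (rule ccontr)
  assume "\<not> ?thesis"
  hence "setmult f S S \<subseteq> {z}" unfolding setmult_def by blast
  moreover have "z \<cdot> z \<in> setmult f S S" unfolding setmult_def using zero_mem by blast
  ultimately show False using zero_simple unfolding zero_simple_def by auto
qed

lemma ideal_zero_or_whole:
  assumes "I \<subseteq> S" "z \<in> I" "\<And>x s. x \<in> I \<Longrightarrow> s \<in> S \<Longrightarrow> s \<cdot> x \<in> I \<and> x \<cdot> s \<in> I"
  shows "I = {z} \<or> I = S"
proof -
  have "two_sided_ideal S f I"
    unfolding two_sided_ideal_def left_ideal_def right_ideal_def setmult_def
    using assms by blast
  thus ?thesis using zero_simple unfolding zero_simple_def by blast
qed

lemma factorization: assumes "x \<in> S" shows "\<exists>a\<in>S. \<exists>b\<in>S. x = a \<cdot> b"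
proof -
  let ?P = "{a \<cdot> b | a b. a \<in> S \<and> b \<in> S}"
  have "?P = {z} \<or> ?P = S"
  proof (rule ideal_zero_or_whole)
    show "?P \<subseteq> S" by auto
    have "z = z \<cdot> z" by simp
    thus "z \<in> ?P" using zero_mem by blast
    fix y s assume "y \<in> ?P" "s \<in> S"
    then obtain a b where "y = a \<cdot> b" "a \<in> S" "b \<in> S" by blast
    hence "s \<cdot> y = (s \<cdot> a) \<cdot> b" "y \<cdot> s = a \<cdot> (b \<cdot> s)" using \<open>s \<in> S\<close> by (simp_all add: assoc)
    thus "s \<cdot> y \<in> ?P \<and> y \<cdot> s \<in> ?P" using \<open>a \<in> S\<close> \<open>b \<in> S\<close> \<open>s \<in> S\<close> by blast
  qed
  moreover have "?P \<noteq> {z}" using not_null by blast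
  ultimately show ?thesis using assms by blast
qed

lemma nonzero_exists: "\<exists>x\<in>S. x \<noteq> z"
  using not_null by auto

lemma ideal_generated_whole:
  assumes x: "x \<in> S" and uv: "u \<in> S" "v \<in> S" "u \<cdot> x \<cdot> v \<noteq> z" and y: "y \<in> S"
  shows "\<exists>u\<in>S. \<exists>v\<in>S. y = u \<cdot> x \<cdot> v"
proof -
  let ?I = "{u \<cdot> x \<cdot> v | u v. u \<in> S \<and> v \<in> S}"
  have "?I = {z} \<or> ?I = S"
  proof (rule ideal_zero_or_whole)
    show "?I \<subseteq> S" using x by auto
    have "z = z \<cdot> x \<cdot> z" using x by simp
    thus "z \<in> ?I" using zero_mem by blast
    fix w s assume "w \<in> ?I" "s \<in> S"
    then obtain u v where "w = u \<cdot> x \<cdot> v" "u \<in> S" "v \<in> S" by blast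
    hence "s \<cdot> w = (s \<cdot> u) \<cdot> x \<cdot> v" "w \<cdot> s = u \<cdot> x \<cdot> (v \<cdot> s)"
      using x \<open>s \<in> S\<close> by (simp_all add: assoc)
    thus "s \<cdot> w \<in> ?I \<and> w \<cdot> s \<in> ?I" using \<open>u \<in> S\<close> \<open>v \<in> S\<close> \<open>s \<in> S\<close> by blast
  qed
  moreover have "?I \<noteq> {z}" using uv by blast
  ultimately show ?thesis using y by blast
qed

text \<open>The elements \<open>x\<close> with \<open>S x S = 0\<close> form an ideal, which is not \<open>S\<close> since \<open>S S S = S S \<noteq> 0\<close>.\<close>
lemma nonzero_sandwich:
  assumes a: "a \<in> S" "a \<noteq> z" shows "\<exists>u\<in>S. \<exists>v\<in>S. u \<cdot> a \<cdot> v \<noteq> z"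
proof -
  let ?T = "{x\<in>S. \<forall>u\<in>S. \<forall>v\<in>S. u \<cdot> x \<cdot> v = z}"
  have "?T = {z} \<or> ?T = S"
    by (rule ideal_zero_or_whole) (auto simp: assoc)
  moreover have "?T \<noteq> S"
  proof
    assume T: "?T = S"
    obtain p b where "p \<in> S" "b \<in> S" "p \<cdot> b \<noteq> z" using not_null by blast
    moreover obtain q w where "b = q \<cdot> w" "q \<in> S" "w \<in> S" using factorization \<open>b \<in> S\<close> by blast
    moreover have "q \<in> ?T" using T \<open>q \<in> S\<close> by blast
    ultimately show False by (auto simp: assoc[symmetric])
  qed
  ultimately show ?thesis using a by blast
qed

lemma self_sandwich: assumes "a \<in> S" "a \<noteq> z" shows "\<exists>u\<in>S. \<exists>v\<in>S. a = u \<cdot> a \<cdot> v"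
  using nonzero_sandwich[OF assms] ideal_generated_whole[OF assms(1) _ _ _ assms(1)] by blast

definition principal_left :: "'a \<Rightarrow> 'a set" where
  "principal_left a = {s \<cdot> a | s. s \<in> S}"

lemma principal_left_memI: "s \<in> S \<Longrightarrow> s \<cdot> a \<in> principal_left a"
  unfolding principal_left_def by blast

lemma principal_left_memE: "x \<in> principal_left a \<Longrightarrow> \<exists>s\<in>S. x = s \<cdot> a"
  unfolding principal_left_def by blast

lemma left_ideal_zero_mem: assumes "left_ideal S f L" shows "z \<in> L"
proof -
  obtain x where x: "x \<in> L" "x \<in> S" using assms unfolding left_ideal_def by blast
  have "z \<cdot> x \<in> setmult f S L" using x zero_mem unfolding setmult_def by blast
  thus ?thesis using assms x(2) unfolding left_ideal_def by auto
qed

lemma left_ideal_mult_closed: "left_ideal S f L \<Longrightarrow> y \<in> L \<Longrightarrow> t \<in> S \<Longrightarrow> t \<cdot> y \<in> L"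
  unfolding left_ideal_def setmult_def by blast

lemma min_left_zero_mem: "zero_minimal_left_ideal S f z L \<Longrightarrow> z \<in> L"
  unfolding zero_minimal_left_ideal_def using left_ideal_zero_mem by blast

lemma min_left_mem: "zero_minimal_left_ideal S f z L \<Longrightarrow> x \<in> L \<Longrightarrow> x \<in> S"
  unfolding zero_minimal_left_ideal_def left_ideal_def by blast

lemma min_left_mult_closed:
  "zero_minimal_left_ideal S f z L \<Longrightarrow> x \<in> L \<Longrightarrow> s \<in> S \<Longrightarrow> s \<cdot> x \<in> L"
  unfolding zero_minimal_left_ideal_def using left_ideal_mult_closed by blast

lemma min_left_minimal:
  assumes L: "zero_minimal_left_ideal S f z L"
    and "L' \<subseteq> L" "z \<in> L'" "\<And>x s. x \<in> L' \<Longrightarrow> s \<in> S \<Longrightarrow> s \<cdot> x \<in> L'"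
  shows "L' = {z} \<or> L' = L"
proof -
  have "left_ideal S f L'"
    unfolding left_ideal_def setmult_def using assms min_left_mem[OF L] by blast
  thus ?thesis using L \<open>L' \<subseteq> L\<close> unfolding zero_minimal_left_ideal_def by blast
qed

text \<open>\<open>L S\<close> is an ideal; were it \<open>0\<close>, \<open>L\<close> itself would be an ideal, hence \<open>S\<close>, and \<open>S S = 0\<close>.\<close>
lemma min_left_factor:
  assumes L: "zero_minimal_left_ideal S f z L" and y: "y \<in> S"
  shows "\<exists>l\<in>L. \<exists>t\<in>S. y = l \<cdot> t"
proof -
  let ?I = "{l \<cdot> s | l s. l \<in> L \<and> s \<in> S}"
  note LS = min_left_mem[OF L]
  have "?I = {z} \<or> ?I = S"
  proof (rule ideal_zero_or_whole)
    show "?I \<subseteq> S" using LS by auto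
    have "z = z \<cdot> z" by simp
    thus "z \<in> ?I" using min_left_zero_mem[OF L] zero_mem by blast
    fix x s assume "x \<in> ?I" "s \<in> S"
    then obtain l t where lt: "x = l \<cdot> t" "l \<in> L" "t \<in> S" by blast
    hence "s \<cdot> x = (s \<cdot> l) \<cdot> t" "x \<cdot> s = l \<cdot> (t \<cdot> s)"
      using LS \<open>s \<in> S\<close> by (simp_all add: assoc)
    thus "s \<cdot> x \<in> ?I \<and> x \<cdot> s \<in> ?I"
      using lt \<open>s \<in> S\<close> min_left_mult_closed[OF L] by blast
  qed
  moreover have "?I \<noteq> {z}"
  proof
    assume I: "?I = {z}"
    have "L = {z} \<or> L = S"
    proof (rule ideal_zero_or_whole)
      show "L \<subseteq> S" "z \<in> L" using LS min_left_zero_mem[OF L] by blast+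
      fix x s assume "x \<in> L" "s \<in> S"
      hence "x \<cdot> s \<in> ?I" by blast
      thus "s \<cdot> x \<in> L \<and> x \<cdot> s \<in> L"
        using I min_left_mult_closed[OF L] min_left_zero_mem[OF L] \<open>x \<in> L\<close> \<open>s \<in> S\<close> by simp
    qed
    hence "L = S" using L unfolding zero_minimal_left_ideal_def by blast
    obtain x y where "x \<in> S" "y \<in> S" "x \<cdot> y \<noteq> z" using not_null by blast
    moreover have "x \<cdot> y \<in> ?I" using calculation \<open>L = S\<close> by blast
    ultimately show False using I by blast
  qed
  ultimately show ?thesis using y by blast
qed

text \<open>In a \<open>0\<close>-minimal left ideal the elements annihilated from the left form a
  left ideal; if it were the whole ideal, \<open>S L = 0\<close> and hence \<open>S S = S L S = 0\<close>.\<close>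
lemma min_left_left_annihilated:
  assumes L: "zero_minimal_left_ideal S f z L" and a: "a \<in> L" "\<forall>s\<in>S. s \<cdot> a = z"
  shows "a = z"
proof (rule ccontr)
  assume "a \<noteq> z"
  note LS = min_left_mem[OF L]
  let ?N = "{x \<in> L. \<forall>s\<in>S. s \<cdot> x = z}"
  have "?N = {z} \<or> ?N = L"
  proof (rule min_left_minimal[OF L])
    show "?N \<subseteq> L" "z \<in> ?N" using min_left_zero_mem[OF L] by auto
    fix x s assume x: "x \<in> ?N" and s: "s \<in> S"
    have "t \<cdot> (s \<cdot> x) = z" if "t \<in> S" for t
      using x s that LS[of x] by (simp add: assoc[symmetric])
    thus "s \<cdot> x \<in> ?N" using x s min_left_mult_closed[OF L] by blast
  qed
  hence N: "?N = L" using a \<open>a \<noteq> z\<close> by blast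
  have "x \<cdot> y = z" if "x \<in> S" "y \<in> S" for x y
  proof -
    obtain l t where l: "l \<in> L" "t \<in> S" "y = l \<cdot> t" using min_left_factor[OF L \<open>y \<in> S\<close>] by blast
    hence "x \<cdot> y = (x \<cdot> l) \<cdot> t" using \<open>x \<in> S\<close> LS by (simp add: assoc)
    also have "x \<cdot> l = z" using N l(1) \<open>x \<in> S\<close> by blast
    finally show ?thesis using l(2) by simp
  qed
  thus False using not_null by blast
qed

lemma min_left_principal:
  assumes L: "zero_minimal_left_ideal S f z L" and a: "a \<in> L" "a \<noteq> z"
  shows "principal_left a = L"
proof -
  have aS: "a \<in> S" using min_left_mem[OF L a(1)] .
  have "principal_left a = {z} \<or> principal_left a = L"
  proof (rule min_left_minimal[OF L])
    show "principal_left a \<subseteq> L"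
      using min_left_mult_closed[OF L a(1)] unfolding principal_left_def by blast
    have "z = z \<cdot> a" using aS by simp
    thus "z \<in> principal_left a" unfolding principal_left_def using zero_mem by blast
    fix x s assume "x \<in> principal_left a" "s \<in> S"
    then obtain t where "t \<in> S" "x = t \<cdot> a" unfolding principal_left_def by blast
    hence "s \<cdot> x = (s \<cdot> t) \<cdot> a" using aS \<open>s \<in> S\<close> by (simp add: assoc)
    thus "s \<cdot> x \<in> principal_left a"
      using principal_left_memI \<open>t \<in> S\<close> \<open>s \<in> S\<close> by simp
  qed
  moreover have "principal_left a \<noteq> {z}"
  proof
    assume "principal_left a = {z}"
    hence "\<forall>s\<in>S. s \<cdot> a = z" using principal_left_memI by blast
    thus False using min_left_left_annihilated[OF L a(1)] a(2) by blast
  qed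
  ultimately show ?thesis by blast
qed

lemma min_left_mult_right:
  assumes L: "zero_minimal_left_ideal S f z L" and s: "s \<in> S"
    and nz: "{l \<cdot> s | l. l \<in> L} \<noteq> {z}"
  shows "zero_minimal_left_ideal S f z {l \<cdot> s | l. l \<in> L}"
proof -
  let ?M = "{l \<cdot> s | l. l \<in> L}"
  note LS = min_left_mem[OF L]
  have li: "left_ideal S f ?M"
    unfolding left_ideal_def
  proof (intro conjI)
    show "?M \<noteq> {}" "?M \<subseteq> S" using min_left_zero_mem[OF L] LS s by auto
    show "setmult f S ?M \<subseteq> ?M"
    proof
      fix x assume "x \<in> setmult f S ?M"
      then obtain t l where "x = t \<cdot> (l \<cdot> s)" "t \<in> S" "l \<in> L" unfolding setmult_def by blast
      hence "x = (t \<cdot> l) \<cdot> s" "t \<cdot> l \<in> L" using LS s min_left_mult_closed[OF L] by (auto simp: assoc)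
      thus "x \<in> ?M" by blast
    qed
  qed
  have "L' = {z} \<or> L' = ?M" if L': "left_ideal S f L'" "L' \<subseteq> ?M" for L'
  proof (cases "L' = {z}")
    case False
    then obtain y where y: "y \<in> L'" "y \<noteq> z" using left_ideal_zero_mem[OF L'(1)] by blast
    then obtain l0 where l0: "y = l0 \<cdot> s" "l0 \<in> L" using L'(2) by blast
    let ?N = "{x \<in> L. x \<cdot> s \<in> L'}"
    have "?N = {z} \<or> ?N = L"
    proof (rule min_left_minimal[OF L])
      show "?N \<subseteq> L" "z \<in> ?N" using min_left_zero_mem[OF L] left_ideal_zero_mem[OF L'(1)] s by auto
      fix x t assume x: "x \<in> ?N" and t: "t \<in> S"
      have "t \<cdot> x \<cdot> s = t \<cdot> (x \<cdot> s)" using x t s LS by (simp add: assoc)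
      thus "t \<cdot> x \<in> ?N"
        using x t min_left_mult_closed[OF L] left_ideal_mult_closed[OF L'(1)] by auto
    qed
    moreover have "l0 \<in> ?N" "l0 \<noteq> z" using l0 y s by auto
    ultimately have "?N = L" by blast
    thus ?thesis using L'(2) by blast
  qed simp
  thus ?thesis unfolding zero_minimal_left_ideal_def using li nz by blast
qed

lemma principal_left_minimal:
  assumes a: "a \<in> S" "a \<noteq> z"
  shows "zero_minimal_left_ideal S f z (principal_left a)" and "a \<in> principal_left a"
proof -
  obtain L where L: "zero_minimal_left_ideal S f z L" using minimal_left_exists by blast
  obtain l s where ls: "l \<in> L" "s \<in> S" "a = l \<cdot> s" using min_left_factor[OF L a(1)] by blast
  let ?M = "{l \<cdot> s | l. l \<in> L}"
  have "a \<in> ?M" using ls by blast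
  hence "?M \<noteq> {z}" using a(2) by blast
  hence M: "zero_minimal_left_ideal S f z ?M" using min_left_mult_right[OF L ls(2)] by blast
  have "principal_left a = ?M" using min_left_principal[OF M \<open>a \<in> ?M\<close> a(2)] .
  thus "zero_minimal_left_ideal S f z (principal_left a)" "a \<in> principal_left a"
    using M \<open>a \<in> ?M\<close> by simp_all
qed

lemma principal_left_eq:
  assumes "a \<in> S" "a \<noteq> z" "b \<in> principal_left a" "b \<noteq> z"
  shows "principal_left b = principal_left a"
  using min_left_principal[OF principal_left_minimal(1)[OF assms(1,2)] assms(3,4)] .

lemma min_left_mult_nonzero:
  assumes L: "zero_minimal_left_ideal S f z L" and b: "b \<in> S"
    and x0: "x0 \<in> L" "x0 \<cdot> b \<noteq> z" and x: "x \<in> L" "x \<noteq> z"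
  shows "x \<cdot> b \<noteq> z"
proof
  assume xb: "x \<cdot> b = z"
  let ?N = "{y \<in> L. y \<cdot> b = z}"
  have "?N = {z} \<or> ?N = L"
  proof (rule min_left_minimal[OF L])
    show "z \<in> ?N" using min_left_zero_mem[OF L] b by simp
    fix y s assume y: "y \<in> ?N" and s: "s \<in> S"
    have "s \<cdot> y \<cdot> b = s \<cdot> (y \<cdot> b)" using y s b min_left_mem[OF L] by (simp add: assoc)
    thus "s \<cdot> y \<in> ?N" using y s min_left_mult_closed[OF L] by simp
  qed blast
  thus False using x xb x0 by blast
qed

end

lemma completely_zero_simple_dual:
  assumes "completely_zero_simple S f"
  shows "\<exists>z. zero_simple_left_minimal S f z \<and> zero_simple_left_minimal S (\<lambda>x y. f y x) z"
proof -
  obtain z where z: "semigroup_on S f" "is_zero S f z" "zero_simple S f z"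
    "\<exists>L. zero_minimal_left_ideal S f z L" "\<exists>R. zero_minimal_right_ideal S f z R"
    using assms unfolding completely_zero_simple_def by blast
  have "zero_simple_left_minimal S (\<lambda>x y. f y x) z"
  proof
    show "semigroup_on S (\<lambda>x y. f y x)" using z(1) unfolding semigroup_on_def by simp
    show "is_zero S (\<lambda>x y. f y x) z" using z(2) unfolding is_zero_def by simp
    have "two_sided_ideal S (\<lambda>x y. f y x) I = two_sided_ideal S f I" for I
      unfolding two_sided_ideal_def left_ideal_dual[of S f] right_ideal_dual[of S f] by blast
    thus "zero_simple S (\<lambda>x y. f y x) z"
      using z(3) unfolding zero_simple_def setmult_dual[of f] by simp
    show "\<exists>L. zero_minimal_left_ideal S (\<lambda>x y. f y x) z L"
      using z(5) unfolding zero_minimal_left_ideal_def zero_minimal_right_ideal_def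
        left_ideal_dual[of S f] .
  qed
  moreover have "zero_simple_left_minimal S f z" using z by unfold_locales
  ultimately show ?thesis by blast
qed

locale completely_zero_simple_semigroup =
  L: zero_simple_left_minimal S f z + R: zero_simple_left_minimal S "\<lambda>x y. f y x" z
  for S f z
begin

notation f (infixl "\<cdot>" 70)

definition principal_right :: "'a \<Rightarrow> 'a set" where
  "principal_right a = {a \<cdot> s | s. s \<in> S}"

lemma principal_right_dual: "R.principal_left a = principal_right a"
  unfolding R.principal_left_def principal_right_def by simp

lemma principal_right_memI: "s \<in> S \<Longrightarrow> a \<cdot> s \<in> principal_right a"
  unfolding principal_right_def by blast

lemma principal_right_memE: "x \<in> principal_right a \<Longrightarrow> \<exists>s\<in>S. x = a \<cdot> s"
  unfolding principal_right_def by blast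

lemma principal_right_minimal:
  assumes "a \<in> S" "a \<noteq> z"
  shows "zero_minimal_right_ideal S f z (principal_right a)" and "a \<in> principal_right a"
  using R.principal_left_minimal[OF assms]
  unfolding principal_right_dual zero_minimal_left_ideal_def zero_minimal_right_ideal_def
    left_ideal_dual[of S f] by simp_all

lemma principal_right_eq:
  assumes "a \<in> S" "a \<noteq> z" "b \<in> principal_right a" "b \<noteq> z"
  shows "principal_right b = principal_right a"
  using R.principal_left_eq[OF assms[folded principal_right_dual]]
  unfolding principal_right_dual .

text \<open>From \<open>a = u a v\<close> we get \<open>a v \<noteq> 0\<close> and \<open>S v = S a\<close>; right multiplication by \<open>v\<close> kills
  no nonzero element of the \<open>0\<close>-minimal left ideal \<open>S a\<close>, in particular not \<open>v\<close>.\<close>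
lemma exists_nonzero_square: "\<exists>g\<in>S. g \<noteq> z \<and> g \<cdot> g \<noteq> z"
proof -
  obtain a where a: "a \<in> S" "a \<noteq> z" using L.nonzero_exists by blast
  obtain u v where uv: "u \<in> S" "v \<in> S" "a = u \<cdot> a \<cdot> v" using L.self_sandwich[OF a] by blast
  have av: "a \<cdot> v \<noteq> z"
  proof
    assume "a \<cdot> v = z"
    hence "u \<cdot> a \<cdot> v = z" using uv a by (simp add: L.assoc)
    thus False using uv a by simp
  qed
  hence v: "v \<noteq> z" using a by auto
  have "a \<in> L.principal_left v" using L.principal_left_memI[of "u \<cdot> a" v] uv a by simp
  hence "L.principal_left a = L.principal_left v" using L.principal_left_eq[OF uv(2) v _ a(2)] by simp
  hence "v \<in> L.principal_left a" using L.principal_left_minimal(2)[OF uv(2) v] by simp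
  hence "v \<cdot> v \<noteq> z"
    using L.min_left_mult_nonzero[OF L.principal_left_minimal(1)[OF a] uv(2)
        L.principal_left_minimal(2)[OF a] av _ v] by blast
  thus ?thesis using uv(2) v by blast
qed

text \<open>If \<open>g g \<noteq> 0\<close> then \<open>g g\<close> generates the same principal left and right ideals as \<open>g\<close>,
  so \<open>g = w g g = g g w'\<close>; left multiplication by \<open>g\<close> is then injective on \<open>g S\<close>, and
  \<open>e = g w'\<close> satisfies \<open>g (g (w' e)) = g e e = g = g (g w')\<close>, whence \<open>e e = e\<close>.\<close>
lemma idempotent_of_nonzero_square:
  assumes g: "g \<in> S" "g \<noteq> z" "g \<cdot> g \<noteq> z"
  shows "\<exists>e\<in>S. e \<noteq> z \<and> e \<cdot> e = e"
proof -
  have "g \<cdot> g \<in> L.principal_left g" using L.principal_left_memI[OF g(1)] .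
  hence "L.principal_left (g \<cdot> g) = L.principal_left g" using L.principal_left_eq[OF g(1,2)] g(3) by simp
  hence "g \<in> L.principal_left (g \<cdot> g)" using L.principal_left_minimal(2)[OF g(1,2)] by simp
  then obtain w where w: "w \<in> S" "g = w \<cdot> (g \<cdot> g)" using L.principal_left_memE by blast
  have "g \<cdot> g \<in> principal_right g" using principal_right_memI[OF g(1)] .
  hence "principal_right (g \<cdot> g) = principal_right g" using principal_right_eq[OF g(1,2)] g(3) by simp
  hence "g \<in> principal_right (g \<cdot> g)" using principal_right_minimal(2)[OF g(1,2)] by simp
  then obtain w' where w': "w' \<in> S" "g = (g \<cdot> g) \<cdot> w'" using principal_right_memE by blast
  define e where "e = g \<cdot> w'"
  have eS: "e \<in> S" using g w' e_def by simp
  have ge: "g \<cdot> e = g" using w' g(1) e_def by (simp add: L.assoc)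
  have cancel: "g \<cdot> s = g \<cdot> t" if "s \<in> S" "t \<in> S" "g \<cdot> (g \<cdot> s) = g \<cdot> (g \<cdot> t)" for s t
  proof -
    have "g \<cdot> s = w \<cdot> (g \<cdot> (g \<cdot> s))" using w g(1) that(1) by (metis L.assoc L.mult_closed)
    also have "\<dots> = w \<cdot> (g \<cdot> (g \<cdot> t))" using that(3) by simp
    also have "\<dots> = g \<cdot> t" using w g(1) that(2) by (metis L.assoc L.mult_closed)
    finally show ?thesis .
  qed
  have "g \<cdot> (g \<cdot> (w' \<cdot> e)) = g \<cdot> (g \<cdot> w')"
  proof -
    have "g \<cdot> (g \<cdot> (w' \<cdot> e)) = (g \<cdot> e) \<cdot> e" using g(1) w'(1) eS e_def by (simp add: L.assoc)
    also have "\<dots> = g \<cdot> (g \<cdot> w')" using ge e_def by simp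
    finally show ?thesis .
  qed
  hence "g \<cdot> (w' \<cdot> e) = g \<cdot> w'" using cancel w' eS by simp
  hence "e \<cdot> e = e" using e_def g(1) w'(1) eS by (simp add: L.assoc)
  moreover have "e \<noteq> z" using ge g by auto
  ultimately show ?thesis using eS by blast
qed

lemma nonzero_idempotent_exists: "\<exists>e\<in>S. e \<noteq> z \<and> e \<cdot> e = e"
  using exists_nonzero_square idempotent_of_nonzero_square by blast

end

locale completely_zero_simple_idempotent = completely_zero_simple_semigroup S f z for S f z +
  fixes e assumes e_mem: "e \<in> S" and e_nonzero: "e \<noteq> z" and e_idem: "e \<cdot> e = e"
begin

text \<open>Rees coordinates: \<open>H\<close> is the maximal subgroup at \<open>e\<close>; \<open>right_reps\<close> picks in every
  principal right ideal \<open>\<rho>\<close> an element \<open>r\<close> with \<open>r e = r\<close>, and \<open>left_reps\<close> dually, with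
  \<open>e\<close> itself chosen for the ideals of \<open>e\<close>.\<close>
definition H :: "'a set" where
  "H = {g\<in>S. g \<noteq> z \<and> e \<cdot> g = g \<and> g \<cdot> e = g}"

definition right_classes :: "'a set set" where
  "right_classes = {principal_right a | a. a \<in> S \<and> a \<noteq> z}"

definition left_classes :: "'a set set" where
  "left_classes = {L.principal_left a | a. a \<in> S \<and> a \<noteq> z}"

definition right_rep :: "'a set \<Rightarrow> 'a" where
  "right_rep \<rho> = (if \<rho> = principal_right e then e
     else SOME r. r \<in> \<rho> \<and> r \<in> S \<and> r \<noteq> z \<and> r \<cdot> e = r)"

definition left_rep :: "'a set \<Rightarrow> 'a" where
  "left_rep \<Lambda> = (if \<Lambda> = L.principal_left e then e
     else SOME q. q \<in> \<Lambda> \<and> q \<in> S \<and> q \<noteq> z \<and> e \<cdot> q = q)"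

definition right_reps :: "'a set" where "right_reps = right_rep ` right_classes"

definition left_reps :: "'a set" where "left_reps = left_rep ` left_classes"

lemma factor_through_e:
  assumes "a \<in> S" shows "\<exists>u\<in>S. \<exists>v\<in>S. a = u \<cdot> e \<cdot> v"
  using L.ideal_generated_whole[OF e_mem e_mem e_mem _ assms] e_idem e_nonzero by simp

lemma right_class_rep_exists:
  assumes "\<rho> \<in> right_classes" shows "\<exists>r. r \<in> \<rho> \<and> r \<in> S \<and> r \<noteq> z \<and> r \<cdot> e = r"
proof -
  obtain a where a: "\<rho> = principal_right a" "a \<in> S" "a \<noteq> z"
    using assms unfolding right_classes_def by blast
  obtain u v where uv: "u \<in> S" "v \<in> S" "a = u \<cdot> e \<cdot> v" using factor_through_e[OF a(2)] by blast
  define r where "r = u \<cdot> e"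
  have r: "r \<in> S" "r \<cdot> e = r" using uv e_mem e_idem r_def by (simp_all add: L.assoc)
  have "r \<noteq> z"
  proof
    assume "r = z"
    hence "a = z \<cdot> v" using uv r_def by simp
    thus False using uv(2) a(3) by simp
  qed
  have "a \<in> principal_right r" using principal_right_memI[OF uv(2), of r] uv r_def by simp
  hence "principal_right a = principal_right r" using principal_right_eq[OF r(1) \<open>r \<noteq> z\<close>] a(3) by simp
  hence "r \<in> \<rho>" using principal_right_minimal(2)[OF r(1) \<open>r \<noteq> z\<close>] a(1) by simp
  thus ?thesis using r \<open>r \<noteq> z\<close> by blast
qed

lemma left_class_rep_exists:
  assumes "\<Lambda> \<in> left_classes" shows "\<exists>q. q \<in> \<Lambda> \<and> q \<in> S \<and> q \<noteq> z \<and> e \<cdot> q = q"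
proof -
  obtain a where a: "\<Lambda> = L.principal_left a" "a \<in> S" "a \<noteq> z"
    using assms unfolding left_classes_def by blast
  obtain u v where uv: "u \<in> S" "v \<in> S" "a = u \<cdot> e \<cdot> v" using factor_through_e[OF a(2)] by blast
  define q where "q = e \<cdot> v"
  have q: "q \<in> S" "e \<cdot> q = q" using uv e_mem e_idem q_def by (simp_all add: L.assoc[symmetric])
  have aq: "a = u \<cdot> q" using uv e_mem q_def by (simp add: L.assoc)
  hence "q \<noteq> z" using uv a by auto
  have "a \<in> L.principal_left q" using L.principal_left_memI[OF uv(1), of q] aq by simp
  hence "L.principal_left a = L.principal_left q" using L.principal_left_eq[OF q(1) \<open>q \<noteq> z\<close>] a(3) by simp
  hence "q \<in> \<Lambda>" using L.principal_left_minimal(2)[OF q(1) \<open>q \<noteq> z\<close>] a(1) by simp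
  thus ?thesis using q \<open>q \<noteq> z\<close> by blast
qed

lemma right_rep:
  assumes "\<rho> \<in> right_classes"
  shows "right_rep \<rho> \<in> \<rho> \<and> right_rep \<rho> \<in> S \<and> right_rep \<rho> \<noteq> z \<and> right_rep \<rho> \<cdot> e = right_rep \<rho>"
proof (cases "\<rho> = principal_right e")
  case True
  thus ?thesis using principal_right_minimal(2)[OF e_mem e_nonzero] e_mem e_nonzero e_idem
    unfolding right_rep_def by simp
next
  case False
  thus ?thesis using someI_ex[OF right_class_rep_exists[OF assms]] unfolding right_rep_def by simp
qed

lemma left_rep:
  assumes "\<Lambda> \<in> left_classes"
  shows "left_rep \<Lambda> \<in> \<Lambda> \<and> left_rep \<Lambda> \<in> S \<and> left_rep \<Lambda> \<noteq> z \<and> e \<cdot> left_rep \<Lambda> = left_rep \<Lambda>"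
proof (cases "\<Lambda> = L.principal_left e")
  case True
  thus ?thesis using L.principal_left_minimal(2)[OF e_mem e_nonzero] e_mem e_nonzero e_idem
    unfolding left_rep_def by simp
next
  case False
  thus ?thesis using someI_ex[OF left_class_rep_exists[OF assms]] unfolding left_rep_def by simp
qed

lemma right_repsD:
  assumes "r \<in> right_reps"
  shows "r \<in> S" "r \<noteq> z" "r \<cdot> e = r" "right_rep (principal_right r) = r"
proof -
  obtain \<rho> where \<rho>: "\<rho> \<in> right_classes" "r = right_rep \<rho>" using assms unfolding right_reps_def by blast
  obtain a where a: "\<rho> = principal_right a" "a \<in> S" "a \<noteq> z" using \<rho>(1) unfolding right_classes_def by blast
  have r: "r \<in> \<rho>" "r \<in> S" "r \<noteq> z" "r \<cdot> e = r" using right_rep[OF \<rho>(1)] \<rho>(2) by auto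
  thus "r \<in> S" "r \<noteq> z" "r \<cdot> e = r" by auto
  have "principal_right r = \<rho>" using principal_right_eq[OF a(2,3)] r a(1) by simp
  thus "right_rep (principal_right r) = r" using \<rho>(2) by simp
qed

lemma left_repsD:
  assumes "q \<in> left_reps"
  shows "q \<in> S" "q \<noteq> z" "e \<cdot> q = q" "left_rep (L.principal_left q) = q"
proof -
  obtain \<Lambda> where \<Lambda>: "\<Lambda> \<in> left_classes" "q = left_rep \<Lambda>" using assms unfolding left_reps_def by blast
  obtain a where a: "\<Lambda> = L.principal_left a" "a \<in> S" "a \<noteq> z" using \<Lambda>(1) unfolding left_classes_def by blast
  have q: "q \<in> \<Lambda>" "q \<in> S" "q \<noteq> z" "e \<cdot> q = q" using left_rep[OF \<Lambda>(1)] \<Lambda>(2) by auto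
  thus "q \<in> S" "q \<noteq> z" "e \<cdot> q = q" by auto
  have "L.principal_left q = \<Lambda>" using L.principal_left_eq[OF a(2,3)] q a(1) by simp
  thus "left_rep (L.principal_left q) = q" using \<Lambda>(2) by simp
qed

lemma e_right_rep: "e \<in> right_reps"
proof -
  have "principal_right e \<in> right_classes" unfolding right_classes_def using e_mem e_nonzero by blast
  moreover have "right_rep (principal_right e) = e" unfolding right_rep_def by simp
  ultimately show ?thesis unfolding right_reps_def by force
qed

lemma e_left_rep: "e \<in> left_reps"
proof -
  have "L.principal_left e \<in> left_classes" unfolding left_classes_def using e_mem e_nonzero by blast
  moreover have "left_rep (L.principal_left e) = e" unfolding left_rep_def by simp
  ultimately show ?thesis unfolding left_reps_def by force
qed

lemma finite_right_reps:
  assumes "finite {R. right_ideal S f R}" shows "finite right_reps"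
proof -
  have "right_ideal S f \<rho>" if "\<rho> \<in> right_classes" for \<rho>
    using that principal_right_minimal(1) unfolding right_classes_def zero_minimal_right_ideal_def
    by blast
  hence "right_classes \<subseteq> {R. right_ideal S f R}" by blast
  thus ?thesis using assms finite_subset unfolding right_reps_def by blast
qed

lemma finite_left_reps:
  assumes "finite {L. left_ideal S f L}" shows "finite left_reps"
proof -
  have "left_ideal S f \<Lambda>" if "\<Lambda> \<in> left_classes" for \<Lambda>
    using that L.principal_left_minimal(1) unfolding left_classes_def zero_minimal_left_ideal_def
    by blast
  hence "left_classes \<subseteq> {L. left_ideal S f L}" by blast
  thus ?thesis using assms finite_subset unfolding left_reps_def by blast
qed

lemma HD: "g \<in> H \<Longrightarrow> g \<in> S \<and> g \<noteq> z \<and> e \<cdot> g = g \<and> g \<cdot> e = g"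
  unfolding H_def by blast

lemma e_in_H: "e \<in> H"
  unfolding H_def using e_mem e_nonzero e_idem by blast

lemma H_inverse: assumes h: "h \<in> H" shows "\<exists>y\<in>H. h \<cdot> y = e \<and> y \<cdot> h = e"
proof -
  have h': "h \<in> S" "h \<noteq> z" "e \<cdot> h = h" "h \<cdot> e = h" using HD[OF h] by auto
  have "h \<in> principal_right e" using principal_right_memI[OF h'(1), of e] h'(3) by simp
  hence "principal_right h = principal_right e" using principal_right_eq[OF e_mem e_nonzero _ h'(2)] by simp
  hence "e \<in> principal_right h" using principal_right_minimal(2)[OF e_mem e_nonzero] by simp
  then obtain y1 where y1: "y1 \<in> S" "e = h \<cdot> y1" using principal_right_memE by blast
  have "h \<in> L.principal_left e" using L.principal_left_memI[OF h'(1), of e] h'(4) by simp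
  hence "L.principal_left h = L.principal_left e"
    using L.principal_left_eq[OF e_mem e_nonzero _ h'(2)] by simp
  hence "e \<in> L.principal_left h" using L.principal_left_minimal(2)[OF e_mem e_nonzero] by simp
  then obtain y2 where y2: "y2 \<in> S" "e = y2 \<cdot> h" using L.principal_left_memE by blast
  define y where "y = e \<cdot> y1 \<cdot> e"
  define y' where "y' = e \<cdot> y2 \<cdot> e"
  have yS: "y \<in> S" "y' \<in> S" using y_def y'_def e_mem y1(1) y2(1) by auto
  have ey: "e \<cdot> y = y" "e \<cdot> y' = y'"
    using y_def y'_def e_mem e_idem y1(1) y2(1) by (simp_all add: L.assoc[symmetric])
  have ye: "y \<cdot> e = y" "y' \<cdot> e = y'"
    using y_def y'_def e_mem e_idem y1(1) y2(1) by (simp_all add: L.assoc)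
  have hy: "h \<cdot> y = e"
  proof -
    have "h \<cdot> y = (h \<cdot> e) \<cdot> y1 \<cdot> e" using y_def e_mem y1(1) h'(1) by (simp add: L.assoc)
    also have "\<dots> = e" using h'(4) y1(2)[symmetric] e_idem by simp
    finally show ?thesis .
  qed
  have yh: "y' \<cdot> h = e"
  proof -
    have "y' \<cdot> h = e \<cdot> (y2 \<cdot> (e \<cdot> h))" using y'_def e_mem y2(1) h'(1) by (simp add: L.assoc)
    also have "\<dots> = e" using h'(3) y2(2)[symmetric] e_idem by simp
    finally show ?thesis .
  qed
  have "y' = (y' \<cdot> h) \<cdot> y" using ye hy yS h'(1) by (simp add: L.assoc)
  hence "y' = y" using yh ey by simp
  moreover have "y \<noteq> z" using hy e_nonzero h'(1) by auto
  ultimately show ?thesis unfolding H_def using yS ey ye hy yh by blast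
qed

lemma H_mult_closed: assumes "a \<in> H" "b \<in> H" shows "a \<cdot> b \<in> H"
proof -
  have a: "a \<in> S" "e \<cdot> a = a" "a \<cdot> e = a" using HD[OF assms(1)] by auto
  have b: "b \<in> S" "b \<noteq> z" "e \<cdot> b = b" "b \<cdot> e = b" using HD[OF assms(2)] by auto
  obtain y where y: "y \<in> H" "y \<cdot> a = e" using H_inverse[OF assms(1)] by blast
  have yS: "y \<in> S" using HD[OF y(1)] by simp
  have yab: "y \<cdot> (a \<cdot> b) = b" using y yS a b by (simp add: L.assoc[symmetric])
  have "a \<cdot> b \<noteq> z"
  proof
    assume "a \<cdot> b = z"
    thus False using yab yS b by simp
  qed
  moreover have "e \<cdot> (a \<cdot> b) = a \<cdot> b" "a \<cdot> b \<cdot> e = a \<cdot> b"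
    using a b e_mem by (simp_all add: L.assoc[symmetric] L.assoc)
  ultimately show ?thesis unfolding H_def using a b by simp
qed

lemma maximal_subgroup_H: "maximal_subgroup S f H"
proof -
  have sub: "is_subgroup_of S f H"
    unfolding is_subgroup_of_def using H_mult_closed e_in_H HD H_inverse by blast
  have "K \<subseteq> H" if K: "is_subgroup_of S f K" "H \<subseteq> K" for K
  proof
    obtain e' where e': "e' \<in> K"
      "\<forall>x\<in>K. e' \<cdot> x = x \<and> x \<cdot> e' = x \<and> (\<exists>y\<in>K. x \<cdot> y = e' \<and> y \<cdot> x = e')"
      using K(1) unfolding is_subgroup_of_def by blast
    have KS: "K \<subseteq> S" using K(1) unfolding is_subgroup_of_def by blast
    have eK: "e \<in> K" using e_in_H K(2) by blast
    obtain y where y: "y \<in> K" "y \<cdot> e = e'" using e' eK by blast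
    have "e' = y \<cdot> (e \<cdot> e)" using y e_idem by simp
    also have "\<dots> = e' \<cdot> e" using y e_mem KS by (auto simp: L.assoc[symmetric])
    also have "\<dots> = e" using e' eK by blast
    finally have e'e: "e' = e" .
    fix x assume x: "x \<in> K"
    obtain w where w: "w \<in> K" "x \<cdot> w = e" using e' x e'e by blast
    have "x \<noteq> z" using w KS e_nonzero by auto
    thus "x \<in> H" unfolding H_def using x KS e' e'e by auto
  qed
  thus ?thesis unfolding maximal_subgroup_def using sub by blast
qed

lemma right_rep_left_inverse: assumes "r \<in> right_reps" shows "\<exists>r'\<in>S. r' \<cdot> r = e"
proof -
  have r: "r \<in> S" "r \<noteq> z" "r \<cdot> e = r" using right_repsD[OF assms] by auto
  have "r \<in> L.principal_left e" using L.principal_left_memI[OF r(1), of e] r(3) by simp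
  hence "L.principal_left r = L.principal_left e"
    using L.principal_left_eq[OF e_mem e_nonzero _ r(2)] by simp
  hence "e \<in> L.principal_left r" using L.principal_left_minimal(2)[OF e_mem e_nonzero] by simp
  thus ?thesis using L.principal_left_memE by metis
qed

lemma left_rep_right_inverse: assumes "q \<in> left_reps" shows "\<exists>q'\<in>S. q \<cdot> q' = e"
proof -
  have q: "q \<in> S" "q \<noteq> z" "e \<cdot> q = q" using left_repsD[OF assms] by auto
  have "q \<in> principal_right e" using principal_right_memI[OF q(1), of e] q(3) by simp
  hence "principal_right q = principal_right e" using principal_right_eq[OF e_mem e_nonzero _ q(2)] by simp
  hence "e \<in> principal_right q" using principal_right_minimal(2)[OF e_mem e_nonzero] by simp
  thus ?thesis using principal_right_memE by metis
qed

lemma right_rep_divides: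
  assumes s: "s \<in> S" "s \<noteq> z"
  shows "right_rep (principal_right s) \<in> right_reps" and "\<exists>t\<in>S. s = right_rep (principal_right s) \<cdot> t"
proof -
  have \<rho>: "principal_right s \<in> right_classes" unfolding right_classes_def using s by blast
  thus "right_rep (principal_right s) \<in> right_reps" unfolding right_reps_def by blast
  have r: "right_rep (principal_right s) \<in> principal_right s" "right_rep (principal_right s) \<noteq> z"
    using right_rep[OF \<rho>] by auto
  hence "s \<in> principal_right (right_rep (principal_right s))"
    using principal_right_eq[OF s] principal_right_minimal(2)[OF s] by simp
  thus "\<exists>t\<in>S. s = right_rep (principal_right s) \<cdot> t" using principal_right_memE by blast
qed

lemma left_rep_divides:
  assumes s: "s \<in> S" "s \<noteq> z"
  shows "left_rep (L.principal_left s) \<in> left_reps" and "\<exists>t\<in>S. s = t \<cdot> left_rep (L.principal_left s)"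
proof -
  have \<Lambda>: "L.principal_left s \<in> left_classes" unfolding left_classes_def using s by blast
  thus "left_rep (L.principal_left s) \<in> left_reps" unfolding left_reps_def by blast
  have q: "left_rep (L.principal_left s) \<in> L.principal_left s" "left_rep (L.principal_left s) \<noteq> z"
    using left_rep[OF \<Lambda>] by auto
  hence "s \<in> L.principal_left (left_rep (L.principal_left s))"
    using L.principal_left_eq[OF s] L.principal_left_minimal(2)[OF s] by simp
  thus "\<exists>t\<in>S. s = t \<cdot> left_rep (L.principal_left s)" using L.principal_left_memE by blast
qed

text \<open>With \<open>r' r = e = q q'\<close>, the middle coordinate of \<open>s = r t = t' q\<close> is \<open>e r' s q' e\<close>.\<close>
lemma rees_decomposition_exists:
  assumes s: "s \<in> S" "s \<noteq> z"
  shows "\<exists>r\<in>right_reps. \<exists>g\<in>H. \<exists>q\<in>left_reps. s = r \<cdot> g \<cdot> q"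
proof -
  define r where "r = right_rep (principal_right s)"
  define q where "q = left_rep (L.principal_left s)"
  have rR: "r \<in> right_reps" and qL: "q \<in> left_reps" using right_rep_divides left_rep_divides s r_def q_def by blast+
  obtain t where t: "t \<in> S" "s = r \<cdot> t" using right_rep_divides(2)[OF s] r_def by blast
  obtain t' where t': "t' \<in> S" "s = t' \<cdot> q" using left_rep_divides(2)[OF s] q_def by blast
  have r: "r \<in> S" "r \<cdot> e = r" using right_repsD[OF rR] by auto
  have q: "q \<in> S" "e \<cdot> q = q" using left_repsD[OF qL] by auto
  obtain r' where r': "r' \<in> S" "r' \<cdot> r = e" using right_rep_left_inverse[OF rR] by blast
  obtain q' where q': "q' \<in> S" "q \<cdot> q' = e" using left_rep_right_inverse[OF qL] by blast
  define g where "g = e \<cdot> (r' \<cdot> s \<cdot> q') \<cdot> e"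
  have rs: "r \<cdot> r' \<cdot> s = s"
    using r r' t by (simp add: L.assoc) (metis L.assoc L.mult_closed)
  have sq: "s \<cdot> q' \<cdot> q = s"
    using q q' t' e_mem by (simp add: L.assoc)
  have "r \<cdot> g \<cdot> q = (r \<cdot> e) \<cdot> (r' \<cdot> s \<cdot> q') \<cdot> (e \<cdot> q)"
    using g_def r(1) q(1) e_mem r'(1) q'(1) s(1) by (simp add: L.assoc)
  also have "\<dots> = (r \<cdot> r' \<cdot> s) \<cdot> q' \<cdot> q"
    using r q r'(1) q'(1) s(1) by (simp add: L.assoc)
  finally have rgq: "r \<cdot> g \<cdot> q = s" using rs sq by simp
  have gS: "g \<in> S" using g_def e_mem r' q' s by simp
  hence "g \<noteq> z" using rgq r q s by auto
  moreover have "e \<cdot> g = g" using g_def e_mem e_idem r' q' s by (simp add: L.assoc[symmetric])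
  moreover have "g \<cdot> e = g" using g_def e_mem e_idem r' q' s by (simp add: L.assoc)
  ultimately have "g \<in> H" unfolding H_def using gS by blast
  thus ?thesis using rR qL rgq by blast
qed

lemma rees_middle_coordinate:
  assumes r: "r \<in> right_reps" and g: "g \<in> H" and q: "q \<in> left_reps"
    and r': "r' \<in> S" "r' \<cdot> r = e" and q': "q' \<in> S" "q \<cdot> q' = e"
  shows "r' \<cdot> (r \<cdot> g \<cdot> q) \<cdot> q' = g"
proof -
  have "r' \<cdot> (r \<cdot> g \<cdot> q) \<cdot> q' = (r' \<cdot> r) \<cdot> g \<cdot> (q \<cdot> q')"
    using right_repsD(1)[OF r] left_repsD(1)[OF q] HD[OF g] r'(1) q'(1) by (simp add: L.assoc)
  thus ?thesis using r'(2) q'(2) HD[OF g] by simp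
qed

lemma rees_product_nonzero:
  assumes r: "r \<in> right_reps" and g: "g \<in> H" and q: "q \<in> left_reps" shows "r \<cdot> g \<cdot> q \<noteq> z"
proof
  assume h: "r \<cdot> g \<cdot> q = z"
  obtain r' where r': "r' \<in> S" "r' \<cdot> r = e" using right_rep_left_inverse[OF r] by blast
  obtain q' where q': "q' \<in> S" "q \<cdot> q' = e" using left_rep_right_inverse[OF q] by blast
  have "g = r' \<cdot> z \<cdot> q'" using rees_middle_coordinate[OF r g q r' q'] h by simp
  thus False using r' q' HD[OF g] by simp
qed

lemma rees_decomposition_unique:
  assumes r: "r \<in> right_reps" and g: "g \<in> H" and q: "q \<in> left_reps"
    and r2: "r2 \<in> right_reps" and g2: "g2 \<in> H" and q2: "q2 \<in> left_reps"
    and eq: "r \<cdot> g \<cdot> q = r2 \<cdot> g2 \<cdot> q2"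
  shows "r = r2 \<and> g = g2 \<and> q = q2"
proof -
  let ?s = "r \<cdot> g \<cdot> q"
  have S: "r \<in> S" "r2 \<in> S" "q \<in> S" "q2 \<in> S" "g \<in> S" "g2 \<in> S"
    using right_repsD[OF r] right_repsD[OF r2] left_repsD[OF q] left_repsD[OF q2] HD[OF g] HD[OF g2]
    by auto
  have s: "?s \<in> S" "?s \<noteq> z" using S rees_product_nonzero[OF r g q] by auto
  have "?s \<in> principal_right r" "?s \<in> principal_right r2"
    using principal_right_memI[of "g \<cdot> q" r] principal_right_memI[of "g2 \<cdot> q2" r2] S eq
    by (simp_all add: L.assoc)
  hence "principal_right r = principal_right r2"
    using principal_right_eq[OF _ _ _ s(2)] right_repsD(1,2)[OF r] right_repsD(1,2)[OF r2] by metis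
  hence rr: "r = r2" using right_repsD(4)[OF r] right_repsD(4)[OF r2] by metis
  have "?s \<in> L.principal_left q" "?s \<in> L.principal_left q2"
    using L.principal_left_memI[of "r \<cdot> g" q] L.principal_left_memI[of "r2 \<cdot> g2" q2] S eq by simp_all
  hence "L.principal_left q = L.principal_left q2"
    using L.principal_left_eq[OF _ _ _ s(2)] left_repsD(1,2)[OF q] left_repsD(1,2)[OF q2] by metis
  hence qq: "q = q2" using left_repsD(4)[OF q] left_repsD(4)[OF q2] by metis
  obtain r' where r': "r' \<in> S" "r' \<cdot> r = e" using right_rep_left_inverse[OF r] by blast
  obtain q' where q': "q' \<in> S" "q \<cdot> q' = e" using left_rep_right_inverse[OF q] by blast
  have "g = r' \<cdot> ?s \<cdot> q'" using rees_middle_coordinate[OF r g q r' q'] by simp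
  also have "\<dots> = g2" using rees_middle_coordinate[OF r2 g2 q2, of r' q'] r' q' rr qq eq by simp
  finally show ?thesis using rr qq by simp
qed

lemma sandwich_mem_H:
  assumes "q \<in> left_reps" "r \<in> right_reps" "q \<cdot> r \<noteq> z" shows "q \<cdot> r \<in> H"
proof -
  have q: "q \<in> S" "e \<cdot> q = q" using left_repsD[OF assms(1)] by auto
  have r: "r \<in> S" "r \<cdot> e = r" using right_repsD[OF assms(2)] by auto
  have "e \<cdot> (q \<cdot> r) = q \<cdot> r" "q \<cdot> r \<cdot> e = q \<cdot> r"
    using q r e_mem by (simp_all add: L.assoc[symmetric] L.assoc)
  thus ?thesis unfolding H_def using q r assms(3) by simp
qed

end

section \<open>Rewriting systems\<close>

lemma rstepI: "(u, v) \<in> R \<Longrightarrow> (w1 @ u @ w2, w1 @ v @ w2) \<in> rstep R"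
  unfolding rstep_def by blast

lemma rstepE:
  assumes "(a, b) \<in> rstep R"
  obtains w1 u v w2 where "a = w1 @ u @ w2" "b = w1 @ v @ w2" "(u, v) \<in> R"
  using assms unfolding rstep_def by blast

lemma rstep_words_iff:
  assumes "rewriting_system X R" "(a, b) \<in> rstep R"
  shows "a \<in> words X \<longleftrightarrow> b \<in> words X"
proof -
  obtain w1 u v w2 where h: "a = w1 @ u @ w2" "b = w1 @ v @ w2" "(u, v) \<in> R"
    using assms(2) by (rule rstepE)
  have "u \<in> words X" "v \<in> words X" using assms(1) h(3) unfolding rewriting_system_def by auto
  thus ?thesis using h unfolding words_def by auto
qed

lemma rsteps_words:
  assumes "rewriting_system X R" "(a, b) \<in> (rstep R)\<^sup>*" "a \<in> words X"
  shows "b \<in> words X"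
  using assms(2,3) by induction (use rstep_words_iff[OF assms(1)] in blast)+

lemma rcong_words:
  assumes "rewriting_system X R" "(a, b) \<in> rcong R" "a \<in> words X"
  shows "b \<in> words X"
  using assms(2,3) unfolding rcong_def by induction (use rstep_words_iff[OF assms(1)] in blast)+

lemma rsteps_imp_rcong: "(u, v) \<in> (rstep R)\<^sup>* \<Longrightarrow> (u, v) \<in> rcong R"
  unfolding rcong_def using rtrancl_mono[of "rstep R" "rstep R \<union> (rstep R)\<inverse>"] by blast

lemma rcong_sym: "(u, v) \<in> rcong R \<Longrightarrow> (v, u) \<in> rcong R"
  unfolding rcong_def by (metis converse_Un converse_converse rtrancl_converseI sup_commute)

definition reduction_on :: "'b set \<Rightarrow> ('b list \<times> 'b list) set \<Rightarrow> ('b list \<times> 'b list) set" where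
  "reduction_on X R = {(v, u). u \<in> words X \<and> (u, v) \<in> rstep R}"

lemma noetherian_iff_wf: "noetherian X R \<longleftrightarrow> wf (reduction_on X R)"
  unfolding noetherian_def wf_iff_no_infinite_down_chain reduction_on_def by auto

definition irreducible :: "('b list \<times> 'b list) set \<Rightarrow> 'b list \<Rightarrow> bool" where
  "irreducible R u \<longleftrightarrow> (\<nexists>v. (u, v) \<in> rstep R)"

lemma irreducible_rsteps: "irreducible R u \<Longrightarrow> (u, v) \<in> (rstep R)\<^sup>* \<Longrightarrow> v = u"
  unfolding irreducible_def by (metis converse_rtranclE)

lemma normal_form_exists:
  assumes rs: "rewriting_system X R" and wf: "wf (reduction_on X R)" and u: "u \<in> words X"
  shows "\<exists>v. (u, v) \<in> (rstep R)\<^sup>* \<and> irreducible R v"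
  using wf u
proof (induction u rule: wf_induct_rule)
  case (less u)
  show ?case
  proof (cases "irreducible R u")
    case False
    then obtain v where v: "(u, v) \<in> rstep R" unfolding irreducible_def by blast
    hence "v \<in> words X" "(v, u) \<in> reduction_on X R"
      using rstep_words_iff[OF rs v] less.prems unfolding reduction_on_def by auto
    then obtain w where "(v, w) \<in> (rstep R)\<^sup>*" "irreducible R w" using less.IH by blast
    thus ?thesis using v by (meson converse_rtrancl_into_rtrancl)
  qed blast
qed

lemma confluent_rcong_joinable:
  assumes rs: "rewriting_system X R" and c: "confluent X R" and u: "u \<in> words X"
    and uv: "(u, v) \<in> rcong R"
  shows "\<exists>w. (u, w) \<in> (rstep R)\<^sup>* \<and> (v, w) \<in> (rstep R)\<^sup>*"
  using uv unfolding rcong_def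
proof (induction rule: rtrancl_induct)
  case (step y y')
  then obtain w where w: "(u, w) \<in> (rstep R)\<^sup>*" "(y, w) \<in> (rstep R)\<^sup>*" by blast
  have "y \<in> words X" using rcong_words[OF rs _ u] step.hyps(1) unfolding rcong_def by blast
  show ?case
  proof (cases "(y, y') \<in> rstep R")
    case True
    then obtain w' where "(w, w') \<in> (rstep R)\<^sup>*" "(y', w') \<in> (rstep R)\<^sup>*"
      using c \<open>y \<in> words X\<close> w(2) unfolding confluent_def by blast
    thus ?thesis using w(1) by (meson rtrancl_trans)
  next
    case False
    hence "(y', y) \<in> rstep R" using step.hyps(2) by blast
    thus ?thesis using w by (meson converse_rtrancl_into_rtrancl)
  qed
qed blast

locale rewriting_invariant =
  fixes X :: "'b set" and R :: "('b list \<times> 'b list) set" and val :: "'b list \<Rightarrow> 'c"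
  assumes rewriting_system: "rewriting_system X R"
    and val_rstep: "\<And>a b. a \<in> words X \<Longrightarrow> (a, b) \<in> rstep R \<Longrightarrow> val a = val b"
begin

lemma val_rsteps: "(u, v) \<in> (rstep R)\<^sup>* \<Longrightarrow> u \<in> words X \<Longrightarrow> val u = val v"
proof (induction rule: rtrancl_induct)
  case (step y y')
  thus ?case using val_rstep rsteps_words[OF rewriting_system step.hyps(1)] by simp
qed simp

lemma val_rcong: "(u, v) \<in> rcong R \<Longrightarrow> u \<in> words X \<Longrightarrow> val u = val v"
  unfolding rcong_def
proof (induction rule: rtrancl_induct)
  case (step y y')
  have y: "y \<in> words X" using rcong_words[OF rewriting_system _ step.prems] step.hyps(1)
    unfolding rcong_def by blast
  show ?case
  proof (cases "(y, y') \<in> rstep R")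
    case False
    hence "(y', y) \<in> rstep R" using step.hyps(2) by blast
    thus ?thesis using step val_rstep y rstep_words_iff[OF rewriting_system] by metis
  qed (use step val_rstep y in simp)
qed simp

text \<open>Two distinct normal forms of one word, or of two words of equal value, would be distinct
  irreducible words of equal value.\<close>
context
  assumes wf: "wf (reduction_on X R)"
    and separates: "\<And>a b. a \<in> words X \<Longrightarrow> b \<in> words X \<Longrightarrow> irreducible R a \<Longrightarrow>
      irreducible R b \<Longrightarrow> val a = val b \<Longrightarrow> a = b"
begin

lemma common_normal_form:
  assumes u: "u \<in> words X" and v: "v \<in> words X" and eq: "val u = val v"
  shows "\<exists>n. (u, n) \<in> (rstep R)\<^sup>* \<and> (v, n) \<in> (rstep R)\<^sup>*"
proof -
  obtain n where n: "(u, n) \<in> (rstep R)\<^sup>*" "irreducible R n"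
    using normal_form_exists[OF rewriting_system wf u] by blast
  obtain n' where n': "(v, n') \<in> (rstep R)\<^sup>*" "irreducible R n'"
    using normal_form_exists[OF rewriting_system wf v] by blast
  have "n \<in> words X" "n' \<in> words X" using rsteps_words[OF rewriting_system] n n' u v by auto
  moreover have "val n = val n'" using val_rsteps n(1) n'(1) u v eq by simp
  ultimately have "n = n'" using separates n(2) n'(2) by blast
  thus ?thesis using n n' by blast
qed

lemma complete: "complete_rs X R"
  unfolding complete_rs_def confluent_def noetherian_iff_wf
proof (intro conjI wf ballI allI impI)
  fix u v v' assume u: "u \<in> words X" and h: "(u, v) \<in> (rstep R)\<^sup>* \<and> (u, v') \<in> (rstep R)\<^sup>*"
  have "v \<in> words X" "v' \<in> words X" using rsteps_words[OF rewriting_system _ u] h by auto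
  moreover have "val v = val v'" using val_rsteps u h by metis
  ultimately show "\<exists>w. (v, w) \<in> (rstep R)\<^sup>* \<and> (v', w) \<in> (rstep R)\<^sup>*"
    using common_normal_form by blast
qed

lemma val_eq_iff_rcong:
  assumes "u \<in> words X" "v \<in> words X"
  shows "val u = val v \<longleftrightarrow> (u, v) \<in> rcong R"
proof
  assume "val u = val v"
  then obtain n where "(u, n) \<in> (rstep R)\<^sup>*" "(v, n) \<in> (rstep R)\<^sup>*"
    using common_normal_form assms by blast
  thus "(u, v) \<in> rcong R"
    using rsteps_imp_rcong rcong_sym unfolding rcong_def by (metis rtrancl_trans)
qed (use val_rcong assms in blast)

end

end

definition rename_rules :: "('b \<Rightarrow> 'c) \<Rightarrow> ('b list \<times> 'b list) set \<Rightarrow> ('c list \<times> 'c list) set" where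
  "rename_rules h R = (\<lambda>(l, r). (map h l, map h r)) ` R"

lemma rstep_rename:
  assumes "(a, b) \<in> rstep R" shows "(map h a, map h b) \<in> rstep (rename_rules h R)"
proof -
  obtain w1 u v w2 where h: "a = w1 @ u @ w2" "b = w1 @ v @ w2" "(u, v) \<in> R"
    using assms by (rule rstepE)
  have "(map h u, map h v) \<in> rename_rules h R" unfolding rename_rules_def using h(3) by force
  from rstepI[OF this, of "map h w1" "map h w2"] show ?thesis using h(1,2) by simp
qed

lemma rsteps_rename:
  "(a, b) \<in> (rstep R)\<^sup>* \<Longrightarrow> (map h a, map h b) \<in> (rstep (rename_rules h R))\<^sup>*"
  by (induction rule: rtrancl_induct) (auto dest: rstep_rename intro: rtrancl_into_rtrancl)

lemma rcong_rename: "(a, b) \<in> rcong R \<Longrightarrow> (map h a, map h b) \<in> rcong (rename_rules h R)"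
  unfolding rcong_def
  by (induction rule: rtrancl_induct) (auto dest: rstep_rename intro: rtrancl_into_rtrancl)

lemma words_rename: "map h ` words A = words (h ` A)"
proof
  show "words (h ` A) \<subseteq> map h ` words A"
  proof
    fix w assume "w \<in> words (h ` A)"
    hence w: "w \<noteq> []" "set w \<subseteq> h ` A" unfolding words_def by auto
    have "map h (map (inv_into A h) w) = w"
      unfolding map_map by (rule map_idI) (use w in \<open>auto simp: f_inv_into_f\<close>)
    moreover have "map (inv_into A h) w \<in> words A"
      using w unfolding words_def by (auto simp: inv_into_into)
    ultimately show "w \<in> map h ` words A" by (metis image_eqI)
  qed
qed (unfold words_def, fastforce)

lemma map_inv_into_map: "inj_on h A \<Longrightarrow> set w \<subseteq> A \<Longrightarrow> map (inv_into A h) (map h w) = w"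
  unfolding map_map by (rule map_idI) auto

lemma rename_rules_inverse:
  assumes "rewriting_system A R" "inj_on h A"
  shows "rename_rules (inv_into A h) (rename_rules h R) = R"
proof -
  have "map (inv_into A h) (map h w) = w" if "w \<in> words A" for w
    using map_inv_into_map[OF assms(2)] that unfolding words_def by blast
  hence pair_back: "(map (inv_into A h) (map h l), map (inv_into A h) (map h r)) = (l, r)"
    if "(l, r) \<in> R" for l r
    using assms(1) that unfolding rewriting_system_def by auto
  have "rename_rules (inv_into A h) (rename_rules h R)
      = (\<lambda>(l, r). (map (inv_into A h) (map h l), map (inv_into A h) (map h r))) ` R"
    unfolding rename_rules_def image_image by (simp add: case_prod_beta)
  also have "\<dots> = (\<lambda>p. p) ` R" using pair_back by (intro image_cong) auto
  finally show ?thesis by simp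
qed

context
  fixes A :: "'b set" and R :: "('b list \<times> 'b list) set" and h :: "'b \<Rightarrow> 'c"
  assumes rs: "rewriting_system A R" and inj: "inj_on h A"
begin

private abbreviation "g \<equiv> inv_into A h"

private lemma back_rstep: "(a, b) \<in> rstep (rename_rules h R) \<Longrightarrow> (map g a, map g b) \<in> rstep R"
  using rstep_rename[of a b "rename_rules h R" g] rename_rules_inverse[OF rs inj] by simp

private lemma back_words: "w \<in> words (h ` A) \<Longrightarrow> map g w \<in> words A"
  unfolding words_def by (auto simp: inv_into_into)

private lemma there_and_back: "w \<in> words (h ` A) \<Longrightarrow> map h (map g w) = w"
  unfolding words_def map_map by (rule map_idI) (auto simp: f_inv_into_f)

lemma rewriting_system_rename: "rewriting_system (h ` A) (rename_rules h R)"
  unfolding rewriting_system_def rename_rules_def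
proof (clarsimp)
  fix l r assume "(l, r) \<in> R"
  hence "l \<in> words A" "r \<in> words A" using rs unfolding rewriting_system_def by auto
  thus "map h l \<in> words (h ` A) \<and> map h r \<in> words (h ` A)"
    using words_rename[of h A] by blast
qed

lemma noetherian_rename:
  assumes "noetherian A R" shows "noetherian (h ` A) (rename_rules h R)"
  unfolding noetherian_def
proof
  assume "\<exists>c. (\<forall>i. c i \<in> words (h ` A)) \<and> (\<forall>i. (c i, c (Suc i)) \<in> rstep (rename_rules h R))"
  then obtain c where "\<forall>i. c i \<in> words (h ` A)" "\<forall>i. (c i, c (Suc i)) \<in> rstep (rename_rules h R)"
    by blast
  hence "(\<forall>i. map g (c i) \<in> words A) \<and> (\<forall>i. (map g (c i), map g (c (Suc i))) \<in> rstep R)"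
    using back_words back_rstep by blast
  hence "\<exists>d. (\<forall>i. d i \<in> words A) \<and> (\<forall>i. (d i, d (Suc i)) \<in> rstep R)"
    by (rule exI[of _ "\<lambda>i. map g (c i)"])
  thus False using assms unfolding noetherian_def by blast
qed

lemma confluent_rename: "confluent A R \<Longrightarrow> confluent (h ` A) (rename_rules h R)"
  unfolding confluent_def
proof (intro ballI allI impI)
  fix u v v' assume c: "\<forall>u\<in>words A. \<forall>v v'. (u, v) \<in> (rstep R)\<^sup>* \<and> (u, v') \<in> (rstep R)\<^sup>* \<longrightarrow>
      (\<exists>w. (v, w) \<in> (rstep R)\<^sup>* \<and> (v', w) \<in> (rstep R)\<^sup>*)"
    and u: "u \<in> words (h ` A)"
    and h: "(u, v) \<in> (rstep (rename_rules h R))\<^sup>* \<and> (u, v') \<in> (rstep (rename_rules h R))\<^sup>*"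
  have "(map g u, map g v) \<in> (rstep R)\<^sup>*" "(map g u, map g v') \<in> (rstep R)\<^sup>*"
    using rsteps_rename[of _ _ "rename_rules h R" g] h rename_rules_inverse[OF rs inj] by auto
  then obtain w where "(map g v, w) \<in> (rstep R)\<^sup>*" "(map g v', w) \<in> (rstep R)\<^sup>*"
    using c back_words[OF u] by blast
  hence "(map h (map g v), map h w) \<in> (rstep (rename_rules h R))\<^sup>*"
    "(map h (map g v'), map h w) \<in> (rstep (rename_rules h R))\<^sup>*"
    using rsteps_rename by blast+
  moreover have "v \<in> words (h ` A)" "v' \<in> words (h ` A)"
    using rsteps_words[OF rewriting_system_rename _ u] h by auto
  ultimately show "\<exists>w. (v, w) \<in> (rstep (rename_rules h R))\<^sup>* \<and> (v', w) \<in> (rstep (rename_rules h R))\<^sup>*"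
    using there_and_back by auto
qed

lemma defined_by_rename:
  assumes "defined_by S f A R" shows "defined_by S f (h ` A) (rename_rules h R)"
proof -
  obtain \<phi> where \<phi>: "\<phi> ` words A = S" "\<forall>u\<in>words A. \<forall>v\<in>words A. \<phi> (u @ v) = f (\<phi> u) (\<phi> v)"
    "\<forall>u\<in>words A. \<forall>v\<in>words A. \<phi> u = \<phi> v \<longleftrightarrow> (u, v) \<in> rcong R"
    using assms unfolding defined_by_def by blast
  have "map g ` words (h ` A) = words A"
  proof
    show "words A \<subseteq> map g ` words (h ` A)"
    proof
      fix w assume w: "w \<in> words A"
      hence "map h w \<in> words (h ` A)" using words_rename by blast
      moreover have "map g (map h w) = w" using map_inv_into_map[OF inj] w unfolding words_def by blast
      ultimately show "w \<in> map g ` words (h ` A)" by (metis image_eqI)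
    qed
  qed (use back_words in blast)
  hence image: "(\<lambda>w. \<phi> (map g w)) ` words (h ` A) = S" using \<phi>(1) by (simp only: image_image[symmetric])
  have kernel: "(map g u, map g v) \<in> rcong R \<longleftrightarrow> (u, v) \<in> rcong (rename_rules h R)"
    if "u \<in> words (h ` A)" "v \<in> words (h ` A)" for u v
  proof
    assume "(map g u, map g v) \<in> rcong R"
    from rcong_rename[OF this, of h] show "(u, v) \<in> rcong (rename_rules h R)"
      using there_and_back that by simp
  next
    assume "(u, v) \<in> rcong (rename_rules h R)"
    from rcong_rename[OF this, of g] show "(map g u, map g v) \<in> rcong R"
      using rename_rules_inverse[OF rs inj] by simp
  qed
  show ?thesis unfolding defined_by_def
  proof (intro exI[of _ "\<lambda>w. \<phi> (map g w)"] conjI ballI image)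
    fix u v assume u: "u \<in> words (h ` A)" and v: "v \<in> words (h ` A)"
    show "\<phi> (map g (u @ v)) = f (\<phi> (map g u)) (\<phi> (map g v))"
      using \<phi>(2) back_words[OF u] back_words[OF v] by simp
    show "\<phi> (map g u) = \<phi> (map g v) \<longleftrightarrow> (u, v) \<in> rcong (rename_rules h R)"
      using \<phi>(3) back_words[OF u] back_words[OF v] kernel[OF u v] by simp
  qed
qed

end

lemma fcrs_definedI:
  fixes A :: "'b set"
  assumes "finite A" "finite R" "rewriting_system A R" "complete_rs A R" "defined_by S f A R"
  shows "fcrs_defined S f"
proof -
  obtain h :: "'b \<Rightarrow> nat" where "inj_on h A"
    using finite_imp_inj_to_nat_seg[OF assms(1)] by blast
  note rename = rewriting_system_rename[OF assms(3) this] noetherian_rename[OF assms(3) this]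
    confluent_rename[OF assms(3) this] defined_by_rename[OF assms(3) this]
  have "rewriting_system (h ` A) (rename_rules h R)" "complete_rs (h ` A) (rename_rules h R)"
    "defined_by S f (h ` A) (rename_rules h R)"
    using assms(4,5) rename unfolding complete_rs_def by simp_all
  moreover have "finite (h ` A)" "finite (rename_rules h R)"
    using assms(1,2) unfolding rename_rules_def by simp_all
  ultimately show ?thesis unfolding fcrs_defined_def by blast
qed

lemma wf_union_commuting:
  assumes R: "wf R" and D: "wf D" and comm: "R O D \<subseteq> D O R"
  shows "wf (R \<union> D)"
proof -
  let ?T = "D\<^sup>* O R O D\<^sup>*"
  have "R O D \<subseteq> (R \<union> D)\<^sup>* O R" using comm by blast
  hence T: "wf ?T" using qc_wf_relto_iff[of R D] R by simp
  have "?T O D \<subseteq> ?T" by (auto intro: rtrancl_into_rtrancl)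
  hence "wf (?T \<union> D)" using wf_union_compatible[OF T D] by simp
  moreover have "R \<subseteq> ?T" by (auto intro: relcompI)
  ultimately show ?thesis using wf_subset[of "?T \<union> D" "R \<union> D"] by blast
qed

lemma append_eq_append_Cons_notin:
  assumes "w1 @ l @ w2 = v1 @ a # v2" "a \<notin> set l" "l \<noteq> []"
  shows "(\<exists>p. w1 = v1 @ a # p \<and> v2 = p @ l @ w2) \<or> (\<exists>p. v1 = w1 @ l @ p \<and> w2 = p @ a # v2)"
  using assms
proof (induction v1 arbitrary: w1)
  case Nil
  thus ?case by (cases w1; cases l) auto
next
  case (Cons b v1)
  show ?case
  proof (cases w1)
    case Nil
    hence "l @ w2 = (b # v1) @ a # v2" using Cons.prems by simp
    then obtain p where "b # v1 = l @ p" "w2 = p @ a # v2"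
      using Cons.prems(2) by (auto simp: append_eq_append_conv2 append_eq_Cons_conv)
    thus ?thesis using Nil by auto
  next
    case (Cons c w1')
    thus ?thesis using Cons.prems Cons.IH[of w1'] by auto
  qed
qed

section \<open>Lifting a complete rewriting system from \<open>H\<close> to \<open>S\<close>\<close>

locale rees_decomposition =
  fixes S :: "'a set" and f :: "'a \<Rightarrow> 'a \<Rightarrow> 'a" (infixl "\<cdot>" 70) and z e :: 'a
    and H RI QL :: "'a set"
  assumes semigroup: "semigroup_on S f" and zero: "is_zero S f z"
    and H_subset: "H \<subseteq> S" and e_in_H: "e \<in> H" and e_unit: "g \<in> H \<Longrightarrow> e \<cdot> g = g \<and> g \<cdot> e = g"
    and H_mult: "g \<in> H \<Longrightarrow> h \<in> H \<Longrightarrow> g \<cdot> h \<in> H"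
    and RI_subset: "RI \<subseteq> S" and e_in_RI: "e \<in> RI"
    and QL_subset: "QL \<subseteq> S" and e_in_QL: "e \<in> QL"
    and decomposition: "s \<in> S \<Longrightarrow> s \<noteq> z \<Longrightarrow> \<exists>r\<in>RI. \<exists>g\<in>H. \<exists>q\<in>QL. s = r \<cdot> g \<cdot> q"
    and decomposition_unique: "r \<in> RI \<Longrightarrow> g \<in> H \<Longrightarrow> q \<in> QL \<Longrightarrow> r2 \<in> RI \<Longrightarrow> g2 \<in> H \<Longrightarrow>
       q2 \<in> QL \<Longrightarrow> r \<cdot> g \<cdot> q = r2 \<cdot> g2 \<cdot> q2 \<Longrightarrow> r = r2 \<and> g = g2 \<and> q = q2"
    and decomposition_nonzero: "r \<in> RI \<Longrightarrow> g \<in> H \<Longrightarrow> q \<in> QL \<Longrightarrow> r \<cdot> g \<cdot> q \<noteq> z"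
    and sandwich: "q \<in> QL \<Longrightarrow> r \<in> RI \<Longrightarrow> q \<cdot> r \<noteq> z \<Longrightarrow> q \<cdot> r \<in> H"
begin

lemma mult_closed [simp]: "x \<in> S \<Longrightarrow> y \<in> S \<Longrightarrow> x \<cdot> y \<in> S"
  using semigroup unfolding semigroup_on_def by blast

lemma assoc: "x \<in> S \<Longrightarrow> y \<in> S \<Longrightarrow> w \<in> S \<Longrightarrow> x \<cdot> y \<cdot> w = x \<cdot> (y \<cdot> w)"
  using semigroup unfolding semigroup_on_def by blast

lemma zero_mem [simp]: "z \<in> S"
  and zero_mult [simp]: "x \<in> S \<Longrightarrow> z \<cdot> x = z"
  and mult_zero [simp]: "x \<in> S \<Longrightarrow> x \<cdot> z = z"
  using zero unfolding is_zero_def by blast+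

lemma H_mem [simp]: "g \<in> H \<Longrightarrow> g \<in> S"
  and RI_mem [simp]: "r \<in> RI \<Longrightarrow> r \<in> S"
  and QL_mem [simp]: "q \<in> QL \<Longrightarrow> q \<in> S"
  and e_mem [simp]: "e \<in> S"
  using H_subset RI_subset QL_subset e_in_H by blast+

end

text \<open>\<open>Letter r x q\<close> stands for \<open>r \<phi>(x) q\<close>.  A nonzero element \<open>r \<phi>(x\<^sub>1 \<dots> x\<^sub>n) q\<close> is spelled
  \<open>decorate r q [x\<^sub>1, \<dots>, x\<^sub>n]\<close>, i.e. \<open>r\<close> on the first letter, \<open>q\<close> on the last and \<open>e\<close> elsewhere.\<close>
datatype 'a letter = Letter 'a nat 'a | Zero_letter

locale lifted_presentation = rees_decomposition +
  fixes X :: "nat set" and R :: "(nat list \<times> nat list) set" and \<phi> :: "nat list \<Rightarrow> 'a"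
  assumes finite_RI: "finite RI" and finite_QL: "finite QL"
    and finite_X: "finite X" and finite_R: "finite R"
    and rewriting_system: "rewriting_system X R" and complete: "complete_rs X R"
    and \<phi>_image: "\<phi> ` words X = H"
    and \<phi>_hom: "\<And>u v. u \<in> words X \<Longrightarrow> v \<in> words X \<Longrightarrow> \<phi> (u @ v) = \<phi> u \<cdot> \<phi> v"
    and \<phi>_kernel: "\<And>u v. u \<in> words X \<Longrightarrow> v \<in> words X \<Longrightarrow> \<phi> u = \<phi> v \<longleftrightarrow> (u, v) \<in> rcong R"
begin

lemma \<phi>_mem: "w \<in> words X \<Longrightarrow> \<phi> w \<in> H"
  using \<phi>_image by blast

lemma \<phi>_letter: "x \<in> X \<Longrightarrow> \<phi> [x] \<in> H"
  using \<phi>_mem unfolding words_def by simp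

definition letters :: "'a letter set" where
  "letters = {Letter r x q | r x q. r \<in> RI \<and> x \<in> X \<and> q \<in> QL} \<union> {Zero_letter}"

fun letter_val :: "'a letter \<Rightarrow> 'a" where
  "letter_val (Letter r x q) = r \<cdot> \<phi> [x] \<cdot> q"
| "letter_val Zero_letter = z"

fun word_val :: "'a letter list \<Rightarrow> 'a" where
  "word_val [] = z"
| "word_val [c] = letter_val c"
| "word_val (c # d # w) = letter_val c \<cdot> word_val (d # w)"

fun decorate :: "'a \<Rightarrow> 'a \<Rightarrow> nat list \<Rightarrow> 'a letter list" where
  "decorate r q [] = []"
| "decorate r q [x] = [Letter r x q]"
| "decorate r q (x # y # w) = Letter r x e # decorate e q (y # w)"

fun letter_gens :: "'a letter \<Rightarrow> nat list" where
  "letter_gens (Letter r x q) = [x]"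
| "letter_gens Zero_letter = []"

definition erase :: "'a letter list \<Rightarrow> nat list" where
  "erase w = concat (map letter_gens w)"

fun letter_weight :: "'a letter \<Rightarrow> nat" where
  "letter_weight (Letter r x q) = (if r = e then 0 else 1) + (if q = e then 0 else 1)"
| "letter_weight Zero_letter = 0"

definition weight :: "'a letter list \<Rightarrow> nat" where
  "weight w = sum_list (map letter_weight w)"

fun unmatched :: "'a letter \<Rightarrow> 'a letter \<Rightarrow> bool" where
  "unmatched (Letter r1 x1 q1) (Letter r2 x2 q2) = (q1 \<noteq> e \<or> r2 \<noteq> e)"
| "unmatched _ _ = False"

text \<open>Two adjacent letters \<open>r\<^sub>1 \<phi>(x\<^sub>1) q\<^sub>1 \<cdot> r\<^sub>2 \<phi>(x\<^sub>2) q\<^sub>2\<close> merge into the decorated spelling of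
  \<open>r\<^sub>1 (\<phi>(x\<^sub>1) (q\<^sub>1 r\<^sub>2) \<phi>(x\<^sub>2)) q\<^sub>2\<close>, whose middle factor lies in \<open>H = \<phi>(X\<^sup>+)\<close> unless \<open>q\<^sub>1 r\<^sub>2 = 0\<close>.\<close>
fun merge :: "'a letter \<Rightarrow> 'a letter \<Rightarrow> 'a letter list" where
  "merge (Letter r1 x1 q1) (Letter r2 x2 q2) = (if q1 \<cdot> r2 = z then [Zero_letter]
      else decorate r1 q2 (SOME w. w \<in> words X \<and> \<phi> w = \<phi> [x1] \<cdot> (q1 \<cdot> r2) \<cdot> \<phi> [x2]))"
| "merge _ _ = [Zero_letter]"

definition lifted_rules :: "('a letter list \<times> 'a letter list) set" where
  "lifted_rules = {(decorate r q l, decorate r q t) | r q l t. (l, t) \<in> R \<and> r \<in> RI \<and> q \<in> QL}"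

definition merge_rules :: "('a letter list \<times> 'a letter list) set" where
  "merge_rules = {([c, d], merge c d) | c d. c \<in> letters \<and> d \<in> letters \<and>
     c \<noteq> Zero_letter \<and> d \<noteq> Zero_letter \<and> unmatched c d}"

definition zero_rules :: "('a letter list \<times> 'a letter list) set" where
  "zero_rules = {([Zero_letter, c], [Zero_letter]) | c. c \<in> letters} \<union>
     {([c, Zero_letter], [Zero_letter]) | c. c \<in> letters}"

definition rules :: "('a letter list \<times> 'a letter list) set" where
  "rules = lifted_rules \<union> merge_rules \<union> zero_rules"

lemma letter_val_mem: "c \<in> letters \<Longrightarrow> letter_val c \<in> S"
  unfolding letters_def using \<phi>_letter by auto

lemma lettersE:
  assumes "c \<in> letters"
  obtains "c = Zero_letter" | r x q where "c = Letter r x q" "r \<in> RI" "x \<in> X" "q \<in> QL"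
  using assms unfolding letters_def by blast

lemma Zero_letter_mem [simp]: "Zero_letter \<in> letters"
  unfolding letters_def by blast

lemma finite_letters: "finite letters"
proof -
  have "{Letter r x q | r x q. r \<in> RI \<and> x \<in> X \<and> q \<in> QL} =
      (\<lambda>(r, x, q). Letter r x q) ` (RI \<times> X \<times> QL)"
    by force
  thus ?thesis unfolding letters_def using finite_RI finite_X finite_QL by simp
qed

lemma word_val_Cons: "w \<noteq> [] \<Longrightarrow> word_val (c # w) = letter_val c \<cdot> word_val w"
  by (cases w) auto

lemma word_val_mem: "w \<noteq> [] \<Longrightarrow> set w \<subseteq> letters \<Longrightarrow> word_val w \<in> S"
  by (induction w rule: word_val.induct) (auto simp: letter_val_mem)

lemma word_val_append:
  "u \<noteq> [] \<Longrightarrow> v \<noteq> [] \<Longrightarrow> set u \<subseteq> letters \<Longrightarrow> set v \<subseteq> letters \<Longrightarrow>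
    word_val (u @ v) = word_val u \<cdot> word_val v"
proof (induction u)
  case (Cons c u)
  show ?case
  proof (cases "u = []")
    case False
    have "word_val ((c # u) @ v) = letter_val c \<cdot> (word_val u \<cdot> word_val v)"
      using word_val_Cons False Cons by simp
    also have "\<dots> = word_val (c # u) \<cdot> word_val v"
      using assoc letter_val_mem word_val_mem Cons.prems False word_val_Cons by simp
    finally show ?thesis .
  qed (use Cons.prems word_val_Cons in simp)
qed simp

lemma decorate_eq_Nil [simp]: "decorate r q w = [] \<longleftrightarrow> w = []"
  by (induction r q w rule: decorate.induct) auto

lemma decorate_Cons: "decorate r q (y # w) = Letter r y (if w = [] then q else e) # decorate e q w"
  by (cases w) auto

lemma decorate_append:
  "u \<noteq> [] \<Longrightarrow> v \<noteq> [] \<Longrightarrow> decorate r q (u @ v) = decorate r e u @ decorate e q v"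
proof (induction u arbitrary: r)
  case (Cons x u)
  thus ?case by (cases u; cases v) (auto simp: decorate_Cons)
qed simp

lemma erase_append [simp]: "erase (u @ v) = erase u @ erase v"
  and erase_Cons [simp]: "erase (c # v) = letter_gens c @ erase v"
  and erase_Nil [simp]: "erase [] = []"
  unfolding erase_def by simp_all

lemma erase_decorate [simp]: "erase (decorate r q w) = w"
  by (induction r q w rule: decorate.induct) auto

lemma erase_letters: "set w \<subseteq> letters \<Longrightarrow> set (erase w) \<subseteq> X"
  by (induction w) (auto elim: lettersE)

lemma weight_append [simp]: "weight (u @ v) = weight u + weight v"
  and weight_Cons [simp]: "weight (c # v) = letter_weight c + weight v"
  and weight_Nil [simp]: "weight [] = 0"
  unfolding weight_def by simp_all

lemma weight_decorate:
  "w \<noteq> [] \<Longrightarrow> weight (decorate r q w) = (if r = e then 0 else 1) + (if q = e then 0 else 1)"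
  by (induction r q w rule: decorate.induct) auto

lemma Zero_letter_notin_decorate: "Zero_letter \<notin> set (decorate r q w)"
  by (induction r q w rule: decorate.induct) auto

lemma decorate_words: "w \<in> words X \<Longrightarrow> r \<in> RI \<Longrightarrow> q \<in> QL \<Longrightarrow> decorate r q w \<in> words letters"
proof -
  have "set w \<subseteq> X \<Longrightarrow> r \<in> RI \<Longrightarrow> q \<in> QL \<Longrightarrow> set (decorate r q w) \<subseteq> letters"
    by (induction r q w rule: decorate.induct) (auto simp: letters_def e_in_RI e_in_QL)
  thus "w \<in> words X \<Longrightarrow> r \<in> RI \<Longrightarrow> q \<in> QL \<Longrightarrow> decorate r q w \<in> words letters"
    unfolding words_def by auto
qed

lemma word_val_decorate:
  "w \<in> words X \<Longrightarrow> r \<in> RI \<Longrightarrow> q \<in> QL \<Longrightarrow> word_val (decorate r q w) = r \<cdot> \<phi> w \<cdot> q"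
proof (induction r q w rule: decorate.induct)
  case (3 r q x y w)
  have x: "x \<in> X" and yw: "y # w \<in> words X" using 3(2) unfolding words_def by auto
  have \<phi>: "\<phi> [x] \<in> H" "\<phi> (y # w) \<in> H" using \<phi>_letter[OF x] \<phi>_mem[OF yw] by auto
  have "word_val (decorate r q (x # y # w)) = (r \<cdot> \<phi> [x] \<cdot> e) \<cdot> (e \<cdot> \<phi> (y # w) \<cdot> q)"
    using 3(1)[OF yw e_in_RI 3(4)] word_val_Cons by simp
  also have "\<dots> = r \<cdot> ((\<phi> [x] \<cdot> e) \<cdot> (e \<cdot> \<phi> (y # w))) \<cdot> q" using \<phi> 3(3,4) by (simp add: assoc)
  also have "\<dots> = r \<cdot> \<phi> (x # y # w) \<cdot> q"
    using e_unit \<phi> \<phi>_hom[of "[x]" "y # w"] x yw unfolding words_def by simp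
  finally show ?case .
qed (auto simp: words_def)

lemma merge_correct:
  assumes c: "c \<in> letters" "c \<noteq> Zero_letter" and d: "d \<in> letters" "d \<noteq> Zero_letter"
  shows "merge c d \<in> words letters" and "word_val (merge c d) = word_val [c, d]"
    and "unmatched c d \<Longrightarrow> weight (merge c d) < weight [c, d]"
proof -
  obtain r1 x1 q1 where 1: "c = Letter r1 x1 q1" "r1 \<in> RI" "x1 \<in> X" "q1 \<in> QL"
    using c by (auto elim: lettersE)
  obtain r2 x2 q2 where 2: "d = Letter r2 x2 q2" "r2 \<in> RI" "x2 \<in> X" "q2 \<in> QL"
    using d by (auto elim: lettersE)
  let ?g = "\<phi> [x1] \<cdot> (q1 \<cdot> r2) \<cdot> \<phi> [x2]"
  have \<phi>: "\<phi> [x1] \<in> H" "\<phi> [x2] \<in> H" using \<phi>_letter 1 2 by auto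
  have val: "word_val [c, d] = r1 \<cdot> ?g \<cdot> q2" using 1 2 \<phi> by (simp add: assoc)
  have "merge c d \<in> words letters \<and> word_val (merge c d) = word_val [c, d] \<and>
    (unmatched c d \<longrightarrow> weight (merge c d) < weight [c, d])"
  proof (cases "q1 \<cdot> r2 = z")
    case True
    thus ?thesis using val 1 2 \<phi> by (simp add: words_def)
  next
    case False
    hence "?g \<in> H" using sandwich[OF 1(4) 2(2)] \<phi> H_mult by blast
    hence "\<exists>w. w \<in> words X \<and> \<phi> w = ?g" using \<phi>_image by force
    then obtain w where w: "w \<in> words X" "\<phi> w = ?g"
      and choice: "(SOME w. w \<in> words X \<and> \<phi> w = ?g) = w"
      by (metis (mono_tags, lifting) someI_ex)
    have m: "merge c d = decorate r1 q2 w" using 1 2 False choice by simp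
    have "w \<noteq> []" using w unfolding words_def by simp
    hence "weight (merge c d) < weight [c, d] \<longleftrightarrow> unmatched c d"
      using m weight_decorate 1 2 by auto
    thus ?thesis using m decorate_words[OF w(1) 1(2) 2(4)] word_val_decorate[OF w(1) 1(2) 2(4)]
      val w(2) by simp
  qed
  thus "merge c d \<in> words letters" "word_val (merge c d) = word_val [c, d]"
    "unmatched c d \<Longrightarrow> weight (merge c d) < weight [c, d]" by blast+
qed

lemma rules_cases:
  assumes "(l, t) \<in> rules"
  obtains (lifted) r q l0 t0 where "l = decorate r q l0" "t = decorate r q t0" "(l0, t0) \<in> R"
    "r \<in> RI" "q \<in> QL"
  | (merge) c d where "l = [c, d]" "t = merge c d" "c \<in> letters" "d \<in> letters"
    "c \<noteq> Zero_letter" "d \<noteq> Zero_letter" "unmatched c d"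
  | (zero) c where "c \<in> letters" "l = [Zero_letter, c] \<or> l = [c, Zero_letter]" "t = [Zero_letter]"
  using assms unfolding rules_def lifted_rules_def merge_rules_def zero_rules_def by blast

lemma R_words: "(l, t) \<in> R \<Longrightarrow> l \<in> words X \<and> t \<in> words X"
  using rewriting_system unfolding rewriting_system_def by auto

lemma rules_words: "(l, t) \<in> rules \<Longrightarrow> l \<in> words letters \<and> t \<in> words letters"
proof (induction rule: rules_cases)
  case (lifted r q l0 t0)
  thus ?case using R_words decorate_words by simp
next
  case (merge c d)
  thus ?case using merge_correct(1) unfolding words_def by simp
qed (auto simp: words_def)

lemma rewriting_system_rules: "rewriting_system letters rules"
  unfolding rewriting_system_def using rules_words by blast

lemma finite_rules: "finite rules"
proof -
  have "lifted_rules = (\<lambda>((l, t), r, q). (decorate r q l, decorate r q t)) ` (R \<times> RI \<times> QL)"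
    unfolding lifted_rules_def by force
  hence "finite lifted_rules" using finite_R finite_RI finite_QL by simp
  moreover have "merge_rules \<subseteq> (\<lambda>(c, d). ([c, d], merge c d)) ` (letters \<times> letters)"
    unfolding merge_rules_def by force
  hence "finite merge_rules" using finite_letters finite_subset by blast
  moreover have "zero_rules = (\<lambda>c. ([Zero_letter, c], [Zero_letter])) ` letters \<union>
      (\<lambda>c. ([c, Zero_letter], [Zero_letter])) ` letters"
    unfolding zero_rules_def by blast
  hence "finite zero_rules" using finite_letters by simp
  ultimately show ?thesis unfolding rules_def by simp
qed

lemma rules_val: "(l, t) \<in> rules \<Longrightarrow> word_val l = word_val t"
proof (induction rule: rules_cases)
  case (lifted r q l0 t0)
  have "(l0, t0) \<in> rstep R" using rstepI[of l0 t0 R "[]" "[]"] lifted by simp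
  hence "\<phi> l0 = \<phi> t0" using R_words \<phi>_kernel lifted rsteps_imp_rcong by blast
  thus ?case using lifted R_words word_val_decorate by simp
next
  case (merge c d)
  thus ?case using merge_correct(2) by simp
next
  case (zero c)
  thus ?case using letter_val_mem by auto
qed

lemma word_val_rstep:
  assumes a: "a \<in> words letters" and step: "(a, b) \<in> rstep rules"
  shows "word_val a = word_val b"
proof -
  obtain w1 l t w2 where h: "a = w1 @ l @ w2" "b = w1 @ t @ w2" "(l, t) \<in> rules"
    using step by (rule rstepE)
  have lt: "l \<noteq> []" "t \<noteq> []" "set l \<subseteq> letters" "set t \<subseteq> letters" "word_val l = word_val t"
    using rules_words[OF h(3)] rules_val[OF h(3)] unfolding words_def by auto
  have w: "set w1 \<subseteq> letters" "set w2 \<subseteq> letters" using a h(1) unfolding words_def by auto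
  have "word_val (l @ w2) = word_val (t @ w2)"
    using lt w word_val_append by (cases "w2 = []") auto
  thus ?thesis using h lt w word_val_append[of w1 "l @ w2"] word_val_append[of w1 "t @ w2"]
    by (cases "w1 = []") auto
qed

text \<open>Termination is by the weight first and then by the union of the lifted steps and the
  deletion of a letter next to a zero; a lifted step never touches a zero letter, so the two
  kinds of step commute and the union is well founded because each of them is.\<close>
definition lifted_descent :: "('a letter list \<times> 'a letter list) set" where
  "lifted_descent = {(v, u). u \<in> words letters \<and> (u, v) \<in> rstep lifted_rules}"

definition zero_descent :: "('a letter list \<times> 'a letter list) set" where
  "zero_descent = {(v, u). u \<in> words letters \<and> (\<exists>w1 w2 c. v = w1 @ Zero_letter # w2 \<and>
     (u = w1 @ Zero_letter # c # w2 \<or> u = w1 @ c # Zero_letter # w2))}"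

lemma lifted_rulesE:
  assumes "(l, t) \<in> lifted_rules"
  obtains r q l0 t0 where "l = decorate r q l0" "t = decorate r q t0" "(l0, t0) \<in> R"
  using assms unfolding lifted_rules_def by blast

lemma wf_lifted_descent: "wf lifted_descent"
proof -
  have "lifted_descent \<subseteq> inv_image (reduction_on X R) erase"
  proof
    fix p assume "p \<in> lifted_descent"
    then obtain v u where p: "p = (v, u)" "u \<in> words letters" "(u, v) \<in> rstep lifted_rules"
      unfolding lifted_descent_def by blast
    obtain w1 l t w2 where h: "u = w1 @ l @ w2" "v = w1 @ t @ w2" "(l, t) \<in> lifted_rules"
      using p(3) by (rule rstepE)
    obtain r q l0 t0 where lt: "l = decorate r q l0" "t = decorate r q t0" "(l0, t0) \<in> R"
      using h(3) by (rule lifted_rulesE)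
    have "l0 \<noteq> []" using R_words[OF lt(3)] unfolding words_def by simp
    hence "erase u \<noteq> []" using h(1) lt(1) by simp
    moreover have "set (erase u) \<subseteq> X" using erase_letters p(2) unfolding words_def by blast
    ultimately have "erase u \<in> words X" unfolding words_def by blast
    moreover have "(erase u, erase v) \<in> rstep R" using h lt rstepI[OF lt(3)] by simp
    ultimately show "p \<in> inv_image (reduction_on X R) erase"
      using p(1) unfolding reduction_on_def by simp
  qed
  moreover have "wf (reduction_on X R)" using complete noetherian_iff_wf unfolding complete_rs_def by blast
  ultimately show ?thesis using wf_subset wf_inv_image by blast
qed

lemma wf_zero_descent: "wf zero_descent"
proof (rule wf_subset[OF wf_measure[of length]])
  show "zero_descent \<subseteq> measure length" unfolding zero_descent_def by auto
qed

lemma lifted_step_past_zero: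
  assumes step: "(b, a) \<in> rstep lifted_rules" and b: "b = v1 @ Zero_letter # v2"
    and c: "c = v1 @ Zero_letter # x # v2 \<or> c = v1 @ x # Zero_letter # v2"
  shows "\<exists>b'. (c, b') \<in> rstep lifted_rules \<and> (\<exists>w1 w2. a = w1 @ Zero_letter # w2 \<and>
    (b' = w1 @ Zero_letter # x # w2 \<or> b' = w1 @ x # Zero_letter # w2))"
proof -
  obtain w1 l t w2 where h: "b = w1 @ l @ w2" "a = w1 @ t @ w2" "(l, t) \<in> lifted_rules"
    using step by (rule rstepE)
  obtain r q l0 t0 where lt: "l = decorate r q l0" "(l0, t0) \<in> R" using h(3) by (rule lifted_rulesE)
  have "Zero_letter \<notin> set l" "l \<noteq> []" using lt R_words Zero_letter_notin_decorate
    unfolding words_def by auto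
  with h(1) b consider (right) p where "w1 = v1 @ Zero_letter # p" "v2 = p @ l @ w2"
    | (left) p where "v1 = w1 @ l @ p" "w2 = p @ Zero_letter # v2"
    using append_eq_append_Cons_notin by metis
  thus ?thesis
  proof cases
    case right
    hence "a = v1 @ Zero_letter # (p @ t @ w2)" using h(2) by simp
    moreover have "(c, v1 @ Zero_letter # x # p @ t @ w2) \<in> rstep lifted_rules"
      if "c = v1 @ Zero_letter # x # v2"
      using that right rstepI[OF h(3), of "v1 @ Zero_letter # x # p" w2] by simp
    moreover have "(c, v1 @ x # Zero_letter # p @ t @ w2) \<in> rstep lifted_rules"
      if "c = v1 @ x # Zero_letter # v2"
      using that right rstepI[OF h(3), of "v1 @ x # Zero_letter # p" w2] by simp
    ultimately show ?thesis using c by blast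
  next
    case left
    hence "a = (w1 @ t @ p) @ Zero_letter # v2" using h(2) by simp
    moreover have "(c, (w1 @ t @ p) @ Zero_letter # x # v2) \<in> rstep lifted_rules"
      if "c = v1 @ Zero_letter # x # v2"
      using that left rstepI[OF h(3), of w1 "p @ Zero_letter # x # v2"] by simp
    moreover have "(c, (w1 @ t @ p) @ x # Zero_letter # v2) \<in> rstep lifted_rules"
      if "c = v1 @ x # Zero_letter # v2"
      using that left rstepI[OF h(3), of w1 "p @ x # Zero_letter # v2"] by simp
    ultimately show ?thesis using c by blast
  qed
qed

lemma rewriting_system_lifted_rules: "rewriting_system letters lifted_rules"
  using rules_words unfolding rewriting_system_def rules_def by blast

lemma lifted_zero_commute: "lifted_descent O zero_descent \<subseteq> zero_descent O lifted_descent"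
proof
  fix p assume "p \<in> lifted_descent O zero_descent"
  then obtain a b c where p: "p = (a, c)" "(a, b) \<in> lifted_descent" "(b, c) \<in> zero_descent" by blast
  have c: "c \<in> words letters" using p(3) unfolding zero_descent_def by auto
  obtain v1 v2 x where d: "b = v1 @ Zero_letter # v2"
    "c = v1 @ Zero_letter # x # v2 \<or> c = v1 @ x # Zero_letter # v2"
    using p(3) unfolding zero_descent_def by blast
  have "(b, a) \<in> rstep lifted_rules" using p(2) unfolding lifted_descent_def by auto
  then obtain b' w1 w2 where b': "(c, b') \<in> rstep lifted_rules" "a = w1 @ Zero_letter # w2"
    "b' = w1 @ Zero_letter # x # w2 \<or> b' = w1 @ x # Zero_letter # w2"
    using lifted_step_past_zero[OF _ d] by blast
  have "b' \<in> words letters" using rstep_words_iff[OF rewriting_system_lifted_rules b'(1)] c by blast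
  hence "(a, b') \<in> zero_descent" unfolding zero_descent_def using b'(2,3) by blast
  moreover have "(b', c) \<in> lifted_descent" unfolding lifted_descent_def using b'(1) c by blast
  ultimately show "p \<in> zero_descent O lifted_descent" using p(1) by blast
qed

lemma rule_step_descent:
  assumes u: "u \<in> words letters" and h: "u = w1 @ l @ w2" "v = w1 @ t @ w2" "(l, t) \<in> rules"
  shows "weight t < weight l \<or> (weight t = weight l \<and> (v, u) \<in> lifted_descent \<union> zero_descent)"
  using h(3)
proof (cases rule: rules_cases)
  case (lifted r q l0 t0)
  hence "weight t = weight l" using R_words weight_decorate unfolding words_def by simp
  moreover have "(l, t) \<in> lifted_rules" unfolding lifted_rules_def using lifted by blast
  hence "(v, u) \<in> lifted_descent"
    unfolding lifted_descent_def using u h(1,2) rstepI[of l t lifted_rules w1 w2] by simp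
  ultimately show ?thesis by blast
next
  case (merge c d)
  thus ?thesis using merge_correct(3) by simp
next
  case (zero c)
  show ?thesis
  proof (cases "letter_weight c = 0")
    case True
    from zero(2) have "u = w1 @ Zero_letter # c # w2 \<or> u = w1 @ c # Zero_letter # w2"
      using h(1) by auto
    moreover have "v = w1 @ Zero_letter # w2" using h(2) zero(3) by simp
    ultimately have "(v, u) \<in> zero_descent" using u unfolding zero_descent_def by blast
    thus ?thesis using True zero by auto
  qed (use zero in auto)
qed

lemma wf_reduction_rules: "wf (reduction_on letters rules)"
proof -
  have "reduction_on letters rules \<subseteq>
      inv_image (less_than <*lex*> (lifted_descent \<union> zero_descent)) (\<lambda>w. (weight w, w))"
  proof
    fix p assume "p \<in> reduction_on letters rules"
    then obtain v u where p: "p = (v, u)" "u \<in> words letters" "(u, v) \<in> rstep rules"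
      unfolding reduction_on_def by blast
    obtain w1 l t w2 where h: "u = w1 @ l @ w2" "v = w1 @ t @ w2" "(l, t) \<in> rules"
      using p(3) by (rule rstepE)
    show "p \<in> inv_image (less_than <*lex*> (lifted_descent \<union> zero_descent)) (\<lambda>w. (weight w, w))"
      using rule_step_descent[OF p(2) h] p(1) h by auto
  qed
  moreover have "wf (lifted_descent \<union> zero_descent)"
    by (rule wf_union_commuting[OF wf_lifted_descent wf_zero_descent lifted_zero_commute])
  ultimately show ?thesis by (rule wf_subset[OF wf_inv_image[OF wf_lex_prod[OF wf_less_than]], rotated])
qed

lemma irreducible_no_rule_infix: "irreducible rules w \<Longrightarrow> (l, t) \<in> rules \<Longrightarrow> w \<noteq> p @ l @ s"
  unfolding irreducible_def using rstepI by blast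

lemma irreducible_Zero_letter:
  assumes w: "w \<in> words letters" and irr: "irreducible rules w" and Z: "Zero_letter \<in> set w"
  shows "w = [Zero_letter]"
proof -
  obtain p s where ps: "w = p @ Zero_letter # s" using split_list[OF Z] by blast
  have letters: "set p \<subseteq> letters" "set s \<subseteq> letters" using w ps unfolding words_def by auto
  have "s = []"
  proof (cases s)
    case (Cons c s')
    hence "([Zero_letter, c], [Zero_letter]) \<in> rules"
      using letters unfolding rules_def zero_rules_def by auto
    moreover have "w = p @ [Zero_letter, c] @ s'" using ps Cons by simp
    ultimately show ?thesis using irreducible_no_rule_infix[OF irr] by blast
  qed
  moreover have "p = []"
  proof (cases p rule: rev_exhaust)
    case (snoc p' c)
    hence "([c, Zero_letter], [Zero_letter]) \<in> rules"
      using letters unfolding rules_def zero_rules_def by auto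
    moreover have "w = p' @ [c, Zero_letter] @ s" using ps snoc by simp
    ultimately show ?thesis using irreducible_no_rule_infix[OF irr] by blast
  qed
  ultimately show ?thesis using ps by simp
qed

lemma matched_word_decorate:
  "w \<noteq> [] \<Longrightarrow> set w \<subseteq> letters \<Longrightarrow> Zero_letter \<notin> set w \<Longrightarrow>
    (\<And>p c d s. w = p @ c # d # s \<Longrightarrow> \<not> unmatched c d) \<Longrightarrow>
    \<exists>r\<in>RI. \<exists>q\<in>QL. w = decorate r q (erase w)"
proof (induction w)
  case (Cons c w)
  obtain r x q0 where c: "c = Letter r x q0" "r \<in> RI" "x \<in> X" "q0 \<in> QL"
    using Cons.prems(2,3) by (auto elim: lettersE)
  show ?case
  proof (cases "w = []")
    case False
    have "\<not> unmatched c' d" if "w = p @ c' # d # s" for p c' d s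
      using Cons.prems(4)[of "c # p"] that by simp
    then obtain r' q' where rq: "r' \<in> RI" "q' \<in> QL" "w = decorate r' q' (erase w)"
      using Cons.IH False Cons.prems(2,3) by auto
    obtain y ys where ys: "erase w = y # ys" using rq(3) False by (cases "erase w") auto
    have "\<not> unmatched c (Letter r' y (if ys = [] then q' else e))"
      using Cons.prems(4)[of "[]"] rq(3) ys decorate_Cons by (metis append_Nil)
    hence "q0 = e" "r' = e" using c(1) by auto
    hence "c # w = decorate r q' (x # y # ys)" using c(1) rq(3) ys by simp
    thus ?thesis using c(1,2) rq(2) ys by auto
  qed (use c in auto)
qed simp

lemma decorate_infix:
  assumes "l \<noteq> []" "r \<in> RI" "q \<in> QL"
  shows "\<exists>P T r' q'. r' \<in> RI \<and> q' \<in> QL \<and> decorate r q (p @ l @ s) = P @ decorate r' q' l @ T"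
proof -
  have suffix: "\<exists>T q'. q' \<in> QL \<and> decorate r' q (l @ s) = decorate r' q' l @ T" for r'
  proof (cases "s = []")
    case True thus ?thesis using assms by (intro exI[of _ "[]"] exI[of _ q]) simp
  next
    case False thus ?thesis using decorate_append[OF assms(1) False] e_in_QL by blast
  qed
  show ?thesis
  proof (cases "p = []")
    case True
    thus ?thesis using suffix[of r] assms(2) by (metis append_Nil)
  next
    case False
    hence "decorate r q (p @ l @ s) = decorate r e p @ decorate e q (l @ s)"
      using decorate_append assms(1) by simp
    thus ?thesis using suffix[of e] e_in_RI by (metis append.assoc)
  qed
qed

lemma irreducible_shape:
  assumes w: "w \<in> words letters" and irr: "irreducible rules w"
  shows "w = [Zero_letter] \<or>
    (\<exists>r\<in>RI. \<exists>q\<in>QL. \<exists>u. u \<in> words X \<and> irreducible R u \<and> w = decorate r q u)"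
proof (cases "Zero_letter \<in> set w")
  case False
  have wl: "w \<noteq> []" "set w \<subseteq> letters" using w unfolding words_def by auto
  have "\<not> unmatched c d" if "w = p @ c # d # s" for p c d s
  proof
    assume "unmatched c d"
    moreover have "c \<in> letters" "d \<in> letters" "c \<noteq> Zero_letter" "d \<noteq> Zero_letter"
      using that wl False by auto
    ultimately have "([c, d], merge c d) \<in> rules" unfolding rules_def merge_rules_def by blast
    moreover have "w = p @ [c, d] @ s" using that by simp
    ultimately show False using irreducible_no_rule_infix[OF irr] by blast
  qed
  then obtain r q where rq: "r \<in> RI" "q \<in> QL" "w = decorate r q (erase w)"
    using matched_word_decorate[OF wl False] by blast
  have "erase w \<noteq> []" using rq(3) wl(1) by (metis decorate_eq_Nil)
  hence erase: "erase w \<in> words X" using erase_letters[OF wl(2)] unfolding words_def by blast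
  have "irreducible R (erase w)" unfolding irreducible_def
  proof
    assume "\<exists>v. (erase w, v) \<in> rstep R"
    then obtain p l t s where h: "erase w = p @ l @ s" "(l, t) \<in> R"
      by (metis rstepE)
    have "l \<noteq> []" using R_words[OF h(2)] unfolding words_def by simp
    then obtain P T r' q' where d: "r' \<in> RI" "q' \<in> QL"
      "decorate r q (p @ l @ s) = P @ decorate r' q' l @ T"
      using decorate_infix rq by blast
    have "(decorate r' q' l, decorate r' q' t) \<in> rules"
      unfolding rules_def lifted_rules_def using h(2) d by blast
    moreover have "w = P @ decorate r' q' l @ T" using rq(3) h(1) d(3) by simp
    ultimately show False using irreducible_no_rule_infix[OF irr] by blast
  qed
  thus ?thesis using rq erase by blast
qed (use irreducible_Zero_letter[OF w irr] in blast)

lemma irreducible_val_zero_iff: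
  assumes w: "w \<in> words letters" and irr: "irreducible rules w"
  shows "word_val w = z \<longleftrightarrow> w = [Zero_letter]"
proof (cases "w = [Zero_letter]")
  case False
  then obtain r q u where "r \<in> RI" "q \<in> QL" "u \<in> words X" "w = decorate r q u"
    using irreducible_shape[OF w irr] by blast
  hence "word_val w \<noteq> z" using word_val_decorate decomposition_nonzero \<phi>_mem by simp
  thus ?thesis using False by simp
qed simp

lemma irreducibles_separated:
  assumes a: "a \<in> words letters" and b: "b \<in> words letters"
    and irr: "irreducible rules a" "irreducible rules b" and eq: "word_val a = word_val b"
  shows "a = b"
proof (cases "word_val a = z")
  case True
  thus ?thesis using eq irreducible_val_zero_iff a b irr by metis
next
  case False
  hence "a \<noteq> [Zero_letter]" "b \<noteq> [Zero_letter]" using eq by auto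
  then obtain r q u r2 q2 u2 where
    au: "r \<in> RI" "q \<in> QL" "u \<in> words X" "irreducible R u" "a = decorate r q u" and
    bu: "r2 \<in> RI" "q2 \<in> QL" "u2 \<in> words X" "irreducible R u2" "b = decorate r2 q2 u2"
    using irreducible_shape[OF a irr(1)] irreducible_shape[OF b irr(2)] by blast
  have "r \<cdot> \<phi> u \<cdot> q = r2 \<cdot> \<phi> u2 \<cdot> q2" using eq au bu word_val_decorate by simp
  hence same: "r = r2" "\<phi> u = \<phi> u2" "q = q2"
    using decomposition_unique[OF au(1) \<phi>_mem[OF au(3)] au(2) bu(1) \<phi>_mem[OF bu(3)] bu(2)] by auto
  hence "(u, u2) \<in> rcong R" using \<phi>_kernel au(3) bu(3) by blast
  then obtain w where "(u, w) \<in> (rstep R)\<^sup>*" "(u2, w) \<in> (rstep R)\<^sup>*"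
    using confluent_rcong_joinable[OF rewriting_system _ au(3)] complete
    unfolding complete_rs_def by blast
  hence "u = u2" using irreducible_rsteps au(4) bu(4) by metis
  thus ?thesis using same au(5) bu(5) by simp
qed

lemma word_val_image: "word_val ` words letters = S"
proof
  show "word_val ` words letters \<subseteq> S" using word_val_mem unfolding words_def by blast
  show "S \<subseteq> word_val ` words letters"
  proof
    fix s assume s: "s \<in> S"
    show "s \<in> word_val ` words letters"
    proof (cases "s = z")
      case True
      have "[Zero_letter] \<in> words letters" unfolding words_def by simp
      thus ?thesis using True by (metis image_eqI word_val.simps(2) letter_val.simps(2))
    next
      case False
      obtain r g q where d: "r \<in> RI" "g \<in> H" "q \<in> QL" "s = r \<cdot> g \<cdot> q"
        using decomposition[OF s False] by blast
      obtain u where u: "u \<in> words X" "g = \<phi> u" using \<phi>_image d(2) by force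
      have "word_val (decorate r q u) = s" using word_val_decorate[OF u(1) d(1) d(3)] u(2) d(4) by simp
      thus ?thesis using decorate_words[OF u(1) d(1) d(3)] by (metis image_eqI)
    qed
  qed
qed

theorem fcrs_defined: "fcrs_defined S f"
proof (rule fcrs_definedI[OF finite_letters finite_rules rewriting_system_rules])
  interpret W: rewriting_invariant letters rules word_val
    using rewriting_system_rules word_val_rstep by unfold_locales
  note separation = wf_reduction_rules irreducibles_separated
  show "complete_rs letters rules" by (rule W.complete[OF separation])
  show "defined_by S f letters rules" unfolding defined_by_def
  proof (intro exI[of _ word_val] conjI ballI word_val_image)
    fix u v assume u: "u \<in> words letters" and v: "v \<in> words letters"
    thus "word_val (u @ v) = word_val u \<cdot> word_val v"
      using word_val_append unfolding words_def by simp
    show "word_val u = word_val v \<longleftrightarrow> (u, v) \<in> rcong rules"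
      using W.val_eq_iff_rcong[OF separation u v] .
  qed
qed

end

context completely_zero_simple_idempotent
begin

lemma rees_decomposition: "rees_decomposition S f z e H right_reps left_reps"
proof
  show "semigroup_on S f" by (rule L.semigroup)
  show "is_zero S f z" by (rule L.zero)
  show "H \<subseteq> S" unfolding H_def by blast
  show "right_reps \<subseteq> S" using right_repsD(1) by blast
  show "left_reps \<subseteq> S" using left_repsD(1) by blast
  show "e \<in> H" "e \<in> right_reps" "e \<in> left_reps" by (rule e_in_H e_right_rep e_left_rep)+
  show "e \<cdot> g = g \<and> g \<cdot> e = g" if "g \<in> H" for g using HD[OF that] by blast
  show "g \<cdot> h \<in> H" if "g \<in> H" "h \<in> H" for g h using H_mult_closed[OF that] .
  show "\<exists>r\<in>right_reps. \<exists>g\<in>H. \<exists>q\<in>left_reps. s = r \<cdot> g \<cdot> q" if "s \<in> S" "s \<noteq> z" for s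
    using rees_decomposition_exists[OF that] .
  show "r \<cdot> g \<cdot> q \<noteq> z" if "r \<in> right_reps" "g \<in> H" "q \<in> left_reps" for r g q
    using rees_product_nonzero[OF that] .
  show "q \<cdot> r \<in> H" if "q \<in> left_reps" "r \<in> right_reps" "q \<cdot> r \<noteq> z" for q r
    using sandwich_mem_H[OF that] .
qed (rule rees_decomposition_unique)

lemma fcrs_defined_if_H_fcrs_defined:
  assumes "finite {L. left_ideal S f L}" "finite {R. right_ideal S f R}" "fcrs_defined H f"
  shows "fcrs_defined S f"
proof -
  obtain X :: "nat set" and R \<phi> where XR: "finite X" "finite R" "rewriting_system X R" "complete_rs X R"
    and \<phi>: "\<phi> ` words X = H" "\<forall>u\<in>words X. \<forall>v\<in>words X. \<phi> (u @ v) = \<phi> u \<cdot> \<phi> v"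
      "\<forall>u\<in>words X. \<forall>v\<in>words X. \<phi> u = \<phi> v \<longleftrightarrow> (u, v) \<in> rcong R"
    using assms(3) unfolding fcrs_defined_def defined_by_def by blast
  interpret lifted_presentation S f z e H right_reps left_reps X R \<phi>
  proof (intro lifted_presentation.intro rees_decomposition lifted_presentation_axioms.intro)
    show "finite right_reps" "finite left_reps"
      using finite_right_reps[OF assms(2)] finite_left_reps[OF assms(1)] .
  qed (use XR \<phi> in simp_all)
  show ?thesis by (rule fcrs_defined)
qed

end

theorem theorem1p3:
  fixes S :: "'a set" and f :: "'a \<Rightarrow> 'a \<Rightarrow> 'a"
  assumes "completely_zero_simple S f"
    and "finite {L. left_ideal S f L}"
    and "finite {R. right_ideal S f R}"
    and "\<forall>H. maximal_subgroup S f H \<longrightarrow> fcrs_defined H f"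
  shows "fcrs_defined S f"
proof -
  obtain z where "zero_simple_left_minimal S f z" "zero_simple_left_minimal S (\<lambda>x y. f y x) z"
    using completely_zero_simple_dual[OF assms(1)] by blast
  then interpret completely_zero_simple_semigroup S f z
    by (simp add: completely_zero_simple_semigroup_def)
  obtain e where "e \<in> S" "e \<noteq> z" "f e e = e" using nonzero_idempotent_exists by blast
  then interpret completely_zero_simple_idempotent S f z e by unfold_locales
  show ?thesis using fcrs_defined_if_H_fcrs_defined[OF assms(2,3)] assms(4) maximal_subgroup_H by blast
qed

end
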